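(* Let $K$ and $K'$ be two CMIs on $X_1,\dots,X_n$. Then $K$ implies $K'$ (i.e., for every joint distribution of $X_1,\dots,X_n$, if $K$ is valid then $K'$ is valid) if and only if $K'$ is a sub-CMI of $K$.
   Context: Setting: $X_1,\dots,X_n$ are jointly distributed discrete random variables with $H(X_i)<\infty$; distribution otherwise unspecified. $\mathcal N_n=\{1,\dots,n\}$, $X_\alpha=(X_i,i\in\alpha)$, $X_\emptyset$ constant. A CMI is $K=(C,\langle Q_1,\dots,Q_k\rangle)$, $k\ge0$, $C\subseteq\mathcal N_n$, $\langle\cdot\rangle$ an unordered multiset of subsets of $\mathcal N_n$; it is valid (for a given distribution) if $\sum_i H(X_{Q_i}|X_C)-H(X_{Q_1},\dots,X_{Q_k}|X_C)=0$. Empty members may be deleted; equality of CMIs means equal conditioning sets and equal multisets. Degenerate CMIs (valid for every distribution) are identified and written $(\cdot,\langle\ \rangle)$. $\mathrm{pur}(K)=(C,\langle Q_i\setminus C:Q_i\setminus C\ne\emptyset\rangle)$. For pure $K$: $\mathbb I_K$ = set of indices lying in at least two members of the collection if $k\ge2$ (else $\emptyset$); $P_1,\dots,P_t$ the nonempty sets among $Q_i\setminus\mathbb I_K$; $\mathrm{can}(K)=(\cdot,\langle\ \rangle)$ if $k\le1$, $(C,\langle\mathbb I_K,\mathbb I_K\rangle)$ if $k\ge2,\mathbb I_K\ne\emptyset,t\le1$, $(C,\langle P_1..P_t\rangle)$ if $k\ge2,\mathbb I_K=\emptyset$, $(C,\langle\mathbb I_K,\mathbb I_K,P_1..P_t\rangle)$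 if $k\ge2,\mathbb I_K\ne\emptyset,t\ge2$. For a general CMI $K$, $\mathbb I_K$ denotes the repeated-index set of $\mathrm{pur}(K)$, and $\mathrm{can}(\mathrm{pur}(K))$ is written in general form $(C,\langle\mathbb I_K,\mathbb I_K,P_i,1\le i\le t\rangle)$ (the two copies of $\mathbb I_K$ omitted if $\mathbb I_K=\emptyset$; when $K$ is degenerate, $\mathbb I_K=\emptyset$, $t\in\{0,1\}$). Write $P=\bigcup_iP_i$, $S=C\cup P$. $K'$ conditioning on $K$: with $\mathrm{can}(\mathrm{pur}(K'))=(C',\langle\mathbb I_{K'},\mathbb I_{K'},P'_j,1\le j\le s\rangle)$, let $D=\mathbb I_{K'}\setminus\mathbb I_K$ and $T_1,\dots,T_u$ the nonempty sets among $P'_j\setminus\mathbb I_K$. $R_K^{K'}=(\cdot,\langle\ \rangle)$ if $D=\emptyset,u\le1$; $(C'\setminus\mathbb I_K,\langle T_1..T_u\rangle)$ if $D=\emptyset,u\ge2$; $(C'\setminus\mathbb I_K,\langle D,D\rangle)$ if $D\ne\emptyset,u\le1$; $(C'\setminus\mathbb I_K,\langle D,D,T_1..T_u\rangle)$ if $D\ne\emptyset,u\ge2$. Sub-CMI: let $K''=R_K^{K'}$, $\mathrm{can}(\mathrm{pur}(K''))=(C'',\langle\mathbb I_{K''},\mathbb I_{K''},P''_j,1\le j\le r\rangle)$, $P''=\bigcup_jP''_j$. $K'$ is a sub-CMI of $K$ if one of: (i) $K'=(\cdot,\langle\ \rangle)$; (ii) $\mathrm{can}(\mathrm{pur}(K''))=(\cdot,\langle\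 \rangle)$ and $C\subseteq C'$; (iii) $\mathrm{can}(\mathrm{pur}(K''))\ne(\cdot,\langle\ \rangle)$, $\mathbb I_{K''}=\emptyset$, $P''\subseteq P$, $C\subseteq C''\subseteq S\setminus P''$, and whenever $m_1\in P''_{j_1}$, $m_2\in P''_{j_2}$ with $j_1\ne j_2$, then $m_1\in P_{i_1}$, $m_2\in P_{i_2}$ with $i_1\ne i_2$. *)

theory Defs
  imports "HOL-Probability.Probability" "HOL-Library.Multiset"
begin

text \<open>A joint distribution of the discrete random variables X_1,...,X_n is modelled as a
pmf on outcomes \<omega> :: nat \<Rightarrow> nat, where X_i = \<omega> i (countable alphabets are
encoded in nat).  Only the coordinates 1..n are used.\<close>

definition ent :: "'a pmf \<Rightarrow> real" where
  "ent p = (\<Sum>\<^sub>\<infinity>x. - pmf p x * ln (pmf p x))"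

definition finite_ent :: "'a pmf \<Rightarrow> bool" where
  "finite_ent p \<longleftrightarrow> (\<lambda>x. - pmf p x * ln (pmf p x)) summable_on UNIV"

definition admissible :: "nat \<Rightarrow> (nat \<Rightarrow> nat) pmf \<Rightarrow> bool" where
  "admissible n P \<longleftrightarrow> (\<forall>i\<in>{1..n}. finite_ent (map_pmf (\<lambda>\<omega>. \<omega> i) P))"

definition rv :: "nat set \<Rightarrow> (nat \<Rightarrow> nat) \<Rightarrow> (nat \<Rightarrow> nat)" where
  "rv \<alpha> \<omega> = (\<lambda>i. if i \<in> \<alpha> then \<omega> i else 0)"

definition jointrv :: "nat set multiset \<Rightarrow> (nat \<Rightarrow> nat) \<Rightarrow> (nat set \<Rightarrow> nat \<Rightarrow> nat)" where
  "jointrv Qs \<omega> = (\<lambda>A. if A \<in># Qs then rv A \<omega> else (\<lambda>_. 0))"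

definition condent :: "'o pmf \<Rightarrow> ('o \<Rightarrow> 'a) \<Rightarrow> ('o \<Rightarrow> 'b) \<Rightarrow> real" where
  "condent P f g = ent (map_pmf (\<lambda>\<omega>. (f \<omega>, g \<omega>)) P) - ent (map_pmf g P)"

text \<open>A CMI (C, <Q_1,...,Q_k>): conditioning set and multiset of index sets.\<close>
type_synonym cmi = "nat set \<times> nat set multiset"

definition cmi_on :: "nat \<Rightarrow> cmi \<Rightarrow> bool" where
  "cmi_on n K \<longleftrightarrow> fst K \<subseteq> {1..n} \<and> (\<forall>Q\<in>#snd K. Q \<subseteq> {1..n})"

definition valid :: "(nat \<Rightarrow> nat) pmf \<Rightarrow> cmi \<Rightarrow> bool" where
  "valid P K \<longleftrightarrow>
     sum_mset (image_mset (\<lambda>Q. condent P (rv Q) (rv (fst K))) (snd K))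
       - condent P (jointrv (snd K)) (rv (fst K)) = 0"

definition cmi_implies :: "nat \<Rightarrow> cmi \<Rightarrow> cmi \<Rightarrow> bool" where
  "cmi_implies n K K' \<longleftrightarrow> (\<forall>P. admissible n P \<longrightarrow> valid P K \<longrightarrow> valid P K')"

text \<open>Degenerate: valid for every distribution; these are identified with (.,< >).\<close>
definition degenerate :: "nat \<Rightarrow> cmi \<Rightarrow> bool" where
  "degenerate n K \<longleftrightarrow> (\<forall>P. admissible n P \<longrightarrow> valid P K)"

definition pur :: "cmi \<Rightarrow> cmi" where
  "pur K = (fst K, filter_mset (\<lambda>Q. Q \<noteq> {}) (image_mset (\<lambda>Q. Q - fst K) (snd K)))"

definition repI :: "nat set multiset \<Rightarrow> nat set" where
  "repI Qs = (if 2 \<le> size Qs then {i. 2 \<le> size (filter_mset (\<lambda>Q. i \<in> Q) Qs)} else {})"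

definition Pparts :: "nat set \<Rightarrow> nat set multiset \<Rightarrow> nat set multiset" where
  "Pparts I Qs = filter_mset (\<lambda>A. A \<noteq> {}) (image_mset (\<lambda>Q. Q - I) Qs)"

text \<open>Canonical form of a pure CMI; None stands for (.,< >).\<close>
definition can :: "cmi \<Rightarrow> cmi option" where
  "can K = (let C = fst K; Qs = snd K; I = repI Qs; Ps = Pparts I Qs in
     if size Qs \<le> 1 then None
     else if I = {} then Some (C, Ps)
     else if size Ps \<le> 1 then Some (C, {#I, I#})
     else Some (C, {#I, I#} + Ps))"

definition canpur :: "cmi option \<Rightarrow> cmi option" where
  "canpur K = (case K of None \<Rightarrow> None | Some K0 \<Rightarrow> can (pur K0))"

text \<open>General-form components of can(pur(K)) = (C, <I_K, I_K, P_i>):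
  I_K is the repeated-index set of pur(K), and the P_i are the nonempty sets among the
  members of pur(K) minus I_K (this also covers the degenerate convention).\<close>
definition cmiI :: "cmi \<Rightarrow> nat set" where
  "cmiI K = repI (snd (pur K))"

definition cmiP :: "cmi \<Rightarrow> nat set multiset" where
  "cmiP K = Pparts (cmiI K) (snd (pur K))"

text \<open>R_K^{K'} (K' conditioning on K); None stands for (.,< >).\<close>
definition Rcond :: "cmi \<Rightarrow> cmi \<Rightarrow> cmi option" where
  "Rcond K K' = (let D = cmiI K' - cmiI K; T = Pparts (cmiI K) (cmiP K');
                     C2 = fst K' - cmiI K in
     if D = {} then (if size T \<le> 1 then None else Some (C2, T))
     else if size T \<le> 1 then Some (C2, {#D, D#})
     else Some (C2, {#D, D#} + T))"

definition sub_cmi :: "nat \<Rightarrow> cmi \<Rightarrow> cmi \<Rightarrow> bool" where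
  "sub_cmi n K' K \<longleftrightarrow>
     degenerate n K'
   \<or> (canpur (Rcond K K') = None \<and> fst K \<subseteq> fst K')
   \<or> (\<exists>K3. Rcond K K' = Some K3 \<and> canpur (Some K3) \<noteq> None \<and> cmiI K3 = {}
        \<and> \<Union>(set_mset (cmiP K3)) \<subseteq> \<Union>(set_mset (cmiP K))
        \<and> fst K \<subseteq> fst K3
        \<and> fst K3 \<subseteq> (fst K \<union> \<Union>(set_mset (cmiP K))) - \<Union>(set_mset (cmiP K3))
        \<and> (\<forall>A B m1 m2. A \<in># cmiP K3 \<and> B \<in># cmiP K3 - {#A#} \<and> m1 \<in> A \<and> m2 \<in> B \<longrightarrow>
             (\<exists>X Y. X \<in># cmiP K \<and> Y \<in># cmiP K - {#X#} \<and> m1 \<in> X \<and> m2 \<in> Y)))"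

end

(*
  Everything is phrased through the entropy function h(A) = H(X_A), a polymatroid. A CMI
  (C, <Q_1..Q_k>) is valid iff the total correlation sum_i h(Q_i|C) - h(Q_1..Q_k|C)
  vanishes, and that quantity is a sum of nonnegative conditional mutual informations.

  Sufficiency: if K is valid, every repeated index of K is a function of X_C, so it can be
  deleted from members and conditions alike, and the parts P_i of K are mutually
  independent given X_C. Each summand of the total correlation of a sub-CMI K' is a
  conditional mutual information between two sets covered by disjoint groups of the P_i,
  given a set between C and C \<union> P; moving the P-part of that condition into the two sides
  bounds it by the mutual information of the two groups given C, which vanishes.

  Necessity: if K' is not a sub-CMI, a small distribution separates K from K': either a
  fair coin copied onto a set B of variables, which satisfies exactly the CMIs in which B
  meets the condition or at most one member, or two independent fair bits together with
  their XOR.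
*)
theory Submission
  imports Defs
begin

section \<open>Entropy as an extended nonnegative integral\<close>

text \<open>Entropy as expected surprisal in [0, \<infinity>]. Unlike ent, an infinite sum that is silently 0
  when it diverges, it needs no summability side conditions.\<close>
definition entropy_enn :: "'a pmf \<Rightarrow> ('a \<Rightarrow> 'b) \<Rightarrow> ennreal" where
  "entropy_enn p F = (\<integral>\<^sup>+\<omega>. ennreal (- ln (pmf (map_pmf F p) (F \<omega>))) \<partial>measure_pmf p)"

lemma surprisal_nonneg: "0 \<le> - ln (pmf q v)"
  using pmf_le_1[of q v] pmf_nonneg[of q v] by (cases "pmf q v = 0") auto

lemma entropy_term_nonneg: "0 \<le> - pmf q v * ln (pmf q v)"
  using surprisal_nonneg[of q v] by (simp add: mult_nonneg_nonpos)

lemma entropy_enn_eq_nn_integral_count_space: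
  "entropy_enn p F =
     (\<integral>\<^sup>+v. ennreal (- pmf (map_pmf F p) v * ln (pmf (map_pmf F p) v)) \<partial>count_space UNIV)"
proof -
  let ?q = "map_pmf F p"
  have "entropy_enn p F = (\<integral>\<^sup>+v. ennreal (- ln (pmf ?q v)) \<partial>measure_pmf ?q)"
    unfolding entropy_enn_def by simp
  also have "\<dots> = (\<integral>\<^sup>+v. ennreal (pmf ?q v) * ennreal (- ln (pmf ?q v)) \<partial>count_space UNIV)"
    by (rule nn_integral_measure_pmf)
  also have "\<dots> = (\<integral>\<^sup>+v. ennreal (- pmf ?q v * ln (pmf ?q v)) \<partial>count_space UNIV)"
    by (intro nn_integral_cong) (simp add: ennreal_mult'[symmetric])
  finally show ?thesis .
qed

lemma entropy_enn_id: "entropy_enn q id = (if finite_ent q then ennreal (ent q) else \<infinity>)"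
proof -
  define g where "g v = - pmf q v * ln (pmf q v)" for v
  have g_nonneg: "0 \<le> g v" for v
    unfolding g_def by (rule entropy_term_nonneg)
  have H: "entropy_enn q id = (\<integral>\<^sup>+v. ennreal (g v) \<partial>count_space UNIV)"
    unfolding entropy_enn_eq_nn_integral_count_space g_def by simp
  have "Infinite_Sum.abs_summable_on g UNIV \<longleftrightarrow> g summable_on UNIV"
    using g_nonneg by simp
  then have summable_iff: "Infinite_Set_Sum.abs_summable_on g UNIV \<longleftrightarrow> g summable_on UNIV"
    using abs_summable_equivalent by blast
  show ?thesis
  proof (cases "g summable_on UNIV")
    case True
    then have abs: "Infinite_Set_Sum.abs_summable_on g UNIV"
      using summable_iff by blast
    have "entropy_enn q id = ennreal (infsetsum g UNIV)"
      using H nn_integral_conv_infsetsum[OF abs] g_nonneg by simp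
    then show ?thesis
      using True infsetsum_infsum[OF abs] unfolding finite_ent_def ent_def g_def by simp
  next
    case False
    have "entropy_enn q id = \<infinity>"
    proof (rule ccontr)
      assume "entropy_enn q id \<noteq> \<infinity>"
      then have "integrable (count_space UNIV) g"
        using H g_nonneg by (subst integrable_iff_bounded) (simp add: top.not_eq_extremum)
      then show False
        using False summable_iff by (simp add: abs_summable_on_def)
    qed
    then show ?thesis
      using False unfolding finite_ent_def g_def by simp
  qed
qed

lemma entropy_enn_map_pmf: "entropy_enn (map_pmf F p) id = entropy_enn p F"
  unfolding entropy_enn_def by simp

lemma ent_nonneg: "0 \<le> ent q"
  unfolding ent_def by (rule infsum_nonneg) (rule entropy_term_nonneg)

lemma ent_map_pmf: "ent (map_pmf F p) = enn2real (entropy_enn p F)"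
  using entropy_enn_id[of "map_pmf F p"] ent_nonneg[of "map_pmf F p"]
  by (auto simp: entropy_enn_map_pmf finite_ent_def ent_def infsum_not_exists split: if_splits)

lemma finite_ent_map_pmf: "finite_ent (map_pmf F p) \<longleftrightarrow> entropy_enn p F < \<infinity>"
  using entropy_enn_id[of "map_pmf F p"] by (simp add: entropy_enn_map_pmf)

lemma pmf_map_pmf_apply: "pmf (map_pmf F p) (F \<omega>) = measure p {\<omega>'. F \<omega>' = F \<omega>}"
  by (simp add: pmf_map vimage_def)

lemma pmf_map_pmf_apply_pos: "\<omega> \<in> set_pmf p \<Longrightarrow> 0 < pmf (map_pmf F p) (F \<omega>)"
  by (simp add: pmf_positive)

lemma entropy_enn_cong:
  assumes "\<And>\<omega> \<omega>'. F \<omega> = F \<omega>' \<longleftrightarrow> G \<omega> = G \<omega>'"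
  shows "entropy_enn p F = entropy_enn p G"
proof -
  have "{\<omega>'. F \<omega>' = F \<omega>} = {\<omega>'. G \<omega>' = G \<omega>}" for \<omega>
    using assms by blast
  then show ?thesis
    unfolding entropy_enn_def pmf_map_pmf_apply by simp
qed

lemma entropy_enn_mono:
  assumes "\<And>\<omega> \<omega>'. G \<omega> = G \<omega>' \<Longrightarrow> F \<omega> = F \<omega>'"
  shows "entropy_enn p F \<le> entropy_enn p G"
  unfolding entropy_enn_def
proof (intro nn_integral_mono_AE, unfold AE_measure_pmf_iff, intro ballI ennreal_leI)
  fix \<omega> assume \<omega>: "\<omega> \<in> set_pmf p"
  have "measure p {\<omega>'. G \<omega>' = G \<omega>} \<le> measure p {\<omega>'. F \<omega>' = F \<omega>}"
  proof (rule measure_pmf.finite_measure_mono)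
    show "{\<omega>'. G \<omega>' = G \<omega>} \<subseteq> {\<omega>'. F \<omega>' = F \<omega>}"
      using assms by blast
  qed simp
  then have "pmf (map_pmf G p) (G \<omega>) \<le> pmf (map_pmf F p) (F \<omega>)"
    by (simp only: pmf_map_pmf_apply)
  then show "- ln (pmf (map_pmf F p) (F \<omega>)) \<le> - ln (pmf (map_pmf G p) (G \<omega>))"
    using pmf_map_pmf_apply_pos[OF \<omega>, of G] by simp
qed

lemma entropy_enn_const:
  assumes "\<And>\<omega> \<omega>'. F \<omega> = F \<omega>'"
  shows "entropy_enn p F = 0"
proof -
  have "{\<omega>'. F \<omega>' = F \<omega>} = UNIV" for \<omega>
    using assms by blast
  then have "pmf (map_pmf F p) (F \<omega>) = 1" for \<omega>
    unfolding pmf_map_pmf_apply by simp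
  then show ?thesis
    unfolding entropy_enn_def by simp
qed

lemma nn_integral_pmf_ratio_le_1: "(\<integral>\<^sup>+v. ennreal (pmf r v / pmf q v) \<partial>measure_pmf q) \<le> 1"
proof -
  have "(\<integral>\<^sup>+v. ennreal (pmf r v / pmf q v) \<partial>measure_pmf q)
      = (\<integral>\<^sup>+v. ennreal (pmf q v) * ennreal (pmf r v / pmf q v) \<partial>count_space UNIV)"
    by (rule nn_integral_measure_pmf)
  also have "\<dots> \<le> (\<integral>\<^sup>+v. ennreal (pmf r v) \<partial>count_space UNIV)"
    by (intro nn_integral_mono) (simp add: ennreal_mult'[symmetric])
  also have "\<dots> = 1"
    by (simp add: nn_integral_pmf measure_pmf.emeasure_space_1)
  finally show ?thesis .
qed

lemma measure_cond_pmf: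
  assumes "set_pmf p \<inter> S \<noteq> {}"
  shows "measure (cond_pmf p S) A = measure p (S \<inter> A) / measure p S"
proof -
  have "emeasure (measure_pmf p) S \<noteq> 0"
    using assms by (simp add: emeasure_measure_pmf_not_zero)
  then show ?thesis
    by (simp add: cond_pmf.rep_eq[OF assms] measure_pmf.emeasure_eq_measure)
qed

definition cond_indep_coupling ::
    "'a pmf \<Rightarrow> ('a \<Rightarrow> 'x) \<Rightarrow> ('a \<Rightarrow> 'y) \<Rightarrow> ('a \<Rightarrow> 'z) \<Rightarrow> ('x \<times> 'y \<times> 'z) pmf" where
  "cond_indep_coupling p X Y Z =
     bind_pmf p (\<lambda>\<omega>. map_pmf (\<lambda>\<omega>'. (X \<omega>, Y \<omega>', Z \<omega>)) (cond_pmf p {\<omega>'. Z \<omega>' = Z \<omega>}))"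

lemma pmf_cond_indep_coupling:
  "pmf (cond_indep_coupling p X Y Z) (x, y, z) = measure p {\<omega>. X \<omega> = x \<and> Z \<omega> = z} *
           (measure p {\<omega>. Y \<omega> = y \<and> Z \<omega> = z} / measure p {\<omega>. Z \<omega> = z})"
proof -
  let ?c = "measure p {\<omega>. Y \<omega> = y \<and> Z \<omega> = z} / measure p {\<omega>. Z \<omega> = z}"
  have "pmf (cond_indep_coupling p X Y Z) (x, y, z) =
      (\<integral>\<omega>. pmf (map_pmf (\<lambda>\<omega>'. (X \<omega>, Y \<omega>', Z \<omega>)) (cond_pmf p {\<omega>'. Z \<omega>' = Z \<omega>})) (x, y, z) \<partial>p)"
    unfolding cond_indep_coupling_def by (rule pmf_bind)
  also have "\<dots> = (\<integral>\<omega>. indicator {\<omega>. X \<omega> = x \<and> Z \<omega> = z} \<omega> * ?c \<partial>p)"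
  proof (intro integral_cong_AE, simp, simp, unfold AE_measure_pmf_iff, intro ballI)
    fix \<omega> assume \<omega>: "\<omega> \<in> set_pmf p"
    show "pmf (map_pmf (\<lambda>\<omega>'. (X \<omega>, Y \<omega>', Z \<omega>)) (cond_pmf p {\<omega>'. Z \<omega>' = Z \<omega>})) (x, y, z) =
      indicator {\<omega>. X \<omega> = x \<and> Z \<omega> = z} \<omega> * ?c"
    proof (cases "X \<omega> = x \<and> Z \<omega> = z")
      case True
      have ne: "set_pmf p \<inter> {\<omega>'. Z \<omega>' = Z \<omega>} \<noteq> {}"
        using \<omega> by auto
      have "pmf (map_pmf (\<lambda>\<omega>'. (X \<omega>, Y \<omega>', Z \<omega>)) (cond_pmf p {\<omega>'. Z \<omega>' = Z \<omega>})) (x, y, z)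
          = measure (cond_pmf p {\<omega>'. Z \<omega>' = Z \<omega>}) {\<omega>'. Y \<omega>' = y}"
        using True by (simp add: pmf_map vimage_def)
      also have "\<dots> = measure p ({\<omega>'. Z \<omega>' = z} \<inter> {\<omega>'. Y \<omega>' = y}) / measure p {\<omega>'. Z \<omega>' = z}"
        using measure_cond_pmf[OF ne] True by simp
      also have "{\<omega>'. Z \<omega>' = z} \<inter> {\<omega>'. Y \<omega>' = y} = {\<omega>'. Y \<omega>' = y \<and> Z \<omega>' = z}"
        by auto
      finally show ?thesis
        using True by simp
    next
      case False
      then have "(\<lambda>\<omega>'. (X \<omega>, Y \<omega>', Z \<omega>)) -` {(x, y, z)} = {}"
        by auto
      then show ?thesis
        using False by (simp add: pmf_map)
    qed
  qed
  also have "\<dots> = measure p {\<omega>. X \<omega> = x \<and> Z \<omega> = z} * ?c"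
    by simp
  finally show ?thesis .
qed

lemma ennreal_plus3:
  fixes x y z :: real
  assumes "0 \<le> x" "0 \<le> y" "0 \<le> z"
  shows "ennreal x + ennreal y + ennreal z = ennreal (x + y + z)"
  using assms by (simp add: ennreal_plus)

lemma surprisal_gibbs_bound:
  fixes a b c d :: real
  assumes pos: "0 < a" "0 < b" "0 < c" "0 < d" and le1: "a \<le> 1" "b \<le> 1" "c \<le> 1" "d \<le> 1"
  shows "ennreal (- ln a) + ennreal (- ln b) + 1
    \<le> ennreal (- ln c) + ennreal (- ln d) + ennreal (c * d / (a * b))"
proof -
  have "ln (c * d / (a * b)) \<le> c * d / (a * b) - 1"
    using pos by (intro ln_le_minus_one) simp
  moreover have "ln (c * d / (a * b)) = ln c + ln d - ln a - ln b"
    using pos by (simp add: ln_div ln_mult)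
  ultimately have "- ln a + - ln b + 1 \<le> - ln c + - ln d + c * d / (a * b)"
    by simp
  moreover have nonneg: "0 \<le> - ln a" "0 \<le> - ln b" "0 \<le> - ln c" "0 \<le> - ln d"
      "0 \<le> c * d / (a * b)"
    using pos le1 by simp_all
  ultimately have "ennreal (- ln a + - ln b + 1) \<le> ennreal (- ln c + - ln d + c * d / (a * b))"
    by (intro ennreal_leI)
  then show ?thesis
    using ennreal_plus3[of "- ln a" "- ln b" 1] ennreal_plus3[of "- ln c" "- ln d" "c * d / (a * b)"]
      nonneg by simp
qed

lemma surprisal_cond_indep_coupling:
  fixes p :: "'a pmf" and X :: "'a \<Rightarrow> 'x" and Y :: "'a \<Rightarrow> 'y" and Z :: "'a \<Rightarrow> 'z"
  defines "V \<equiv> \<lambda>\<omega>. (X \<omega>, Y \<omega>, Z \<omega>)" and "XZ \<equiv> \<lambda>\<omega>. (X \<omega>, Z \<omega>)" and "YZ \<equiv> \<lambda>\<omega>. (Y \<omega>, Z \<omega>)"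
  assumes \<omega>: "\<omega> \<in> set_pmf p"
  shows "ennreal (- ln (pmf (map_pmf V p) (V \<omega>))) + ennreal (- ln (pmf (map_pmf Z p) (Z \<omega>))) + 1
    \<le> ennreal (- ln (pmf (map_pmf XZ p) (XZ \<omega>))) + ennreal (- ln (pmf (map_pmf YZ p) (YZ \<omega>)))
      + ennreal (pmf (cond_indep_coupling p X Y Z) (V \<omega>) / pmf (map_pmf V p) (V \<omega>))"
proof -
  define a where "a = pmf (map_pmf V p) (V \<omega>)"
  define b where "b = pmf (map_pmf Z p) (Z \<omega>)"
  define c where "c = pmf (map_pmf XZ p) (XZ \<omega>)"
  define d where "d = pmf (map_pmf YZ p) (YZ \<omega>)"
  have "b = measure p {\<omega>'. Z \<omega>' = Z \<omega>}"
    "c = measure p {\<omega>'. X \<omega>' = X \<omega> \<and> Z \<omega>' = Z \<omega>}"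
    "d = measure p {\<omega>'. Y \<omega>' = Y \<omega> \<and> Z \<omega>' = Z \<omega>}"
    unfolding b_def c_def d_def pmf_map_pmf_apply by (simp_all add: XZ_def YZ_def)
  then have "pmf (cond_indep_coupling p X Y Z) (V \<omega>) / a = c * d / (a * b)"
    unfolding V_def pmf_cond_indep_coupling by simp
  moreover have "0 < a" "0 < b" "0 < c" "0 < d"
    unfolding a_def b_def c_def d_def using pmf_map_pmf_apply_pos[OF \<omega>] by auto
  moreover have "a \<le> 1" "b \<le> 1" "c \<le> 1" "d \<le> 1"
    unfolding a_def b_def c_def d_def by (rule pmf_le_1)+
  ultimately show ?thesis
    using surprisal_gibbs_bound[of a b c d]
    unfolding a_def[symmetric] b_def[symmetric] c_def[symmetric] d_def[symmetric] by simp
qed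

text \<open>Gibbs' inequality against the coupling in which X and Y are conditionally independent
  given Z.\<close>
lemma entropy_enn_submodular:
  fixes p :: "'a pmf" and X :: "'a \<Rightarrow> 'x" and Y :: "'a \<Rightarrow> 'y" and Z :: "'a \<Rightarrow> 'z"
  shows "entropy_enn p (\<lambda>\<omega>. (X \<omega>, Y \<omega>, Z \<omega>)) + entropy_enn p Z
    \<le> entropy_enn p (\<lambda>\<omega>. (X \<omega>, Z \<omega>)) + entropy_enn p (\<lambda>\<omega>. (Y \<omega>, Z \<omega>))"
proof -
  define V where "V = (\<lambda>\<omega>. (X \<omega>, Y \<omega>, Z \<omega>))"
  define XZ where "XZ = (\<lambda>\<omega>. (X \<omega>, Z \<omega>))"
  define YZ where "YZ = (\<lambda>\<omega>. (Y \<omega>, Z \<omega>))"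
  define ratio where "ratio v = pmf (cond_indep_coupling p X Y Z) v / pmf (map_pmf V p) v" for v
  have "entropy_enn p V + entropy_enn p Z + 1
      = (\<integral>\<^sup>+\<omega>. ennreal (- ln (pmf (map_pmf V p) (V \<omega>))) + ennreal (- ln (pmf (map_pmf Z p) (Z \<omega>))) + 1 \<partial>p)"
    unfolding entropy_enn_def by (simp add: nn_integral_add measure_pmf.emeasure_space_1)
  also have "\<dots> \<le> (\<integral>\<^sup>+\<omega>. ennreal (- ln (pmf (map_pmf XZ p) (XZ \<omega>)))
      + ennreal (- ln (pmf (map_pmf YZ p) (YZ \<omega>))) + ennreal (ratio (V \<omega>)) \<partial>p)"
    using surprisal_cond_indep_coupling[of _ p X Y Z] unfolding V_def XZ_def YZ_def ratio_def
    by (intro nn_integral_mono_AE) (simp add: AE_measure_pmf_iff)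
  also have "\<dots> = entropy_enn p XZ + entropy_enn p YZ + (\<integral>\<^sup>+v. ennreal (ratio v) \<partial>map_pmf V p)"
    unfolding entropy_enn_def by (simp add: nn_integral_add)
  also have "\<dots> \<le> entropy_enn p XZ + entropy_enn p YZ + 1"
    unfolding ratio_def using nn_integral_pmf_ratio_le_1 by (rule add_left_mono)
  finally show ?thesis
    unfolding V_def XZ_def YZ_def by (simp add: ennreal_add_left_cancel_le ac_simps)
qed

lemma entropy_enn_finite_support:
  assumes "finite (set_pmf p)"
  shows "entropy_enn p F < \<infinity>"
proof -
  have "entropy_enn p F = (\<Sum>x\<in>set_pmf p. ennreal (- ln (pmf (map_pmf F p) (F x))) * pmf p x)"
    unfolding entropy_enn_def by (rule nn_integral_measure_pmf_finite[OF assms]) simp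
  also have "\<dots> < \<infinity>"
    using assms by (simp add: ennreal_mult_less_top)
  finally show ?thesis .
qed

lemma admissible_finite_support: "finite (set_pmf P) \<Longrightarrow> admissible n P"
  unfolding admissible_def finite_ent_map_pmf using entropy_enn_finite_support by blast

lemma ent_map_pmf_of_set_uniform_fibres:
  assumes S: "finite S" "S \<noteq> {}"
    and fibres: "\<And>\<omega>. \<omega> \<in> S \<Longrightarrow> card (S \<inter> {\<omega>'. F \<omega>' = F \<omega>}) = k"
    and k: "0 < k" "k \<le> card S"
  shows "ent (map_pmf F (pmf_of_set S)) = ln (real (card S) / real k)"
proof -
  have nonneg: "0 \<le> ln (real (card S) / real k)"
    using k by simp
  have "pmf (map_pmf F (pmf_of_set S)) (F \<omega>) = real k / real (card S)" if "\<omega> \<in> S" for \<omega>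
    unfolding pmf_map_pmf_apply using S fibres[OF that] by (simp add: measure_pmf_of_set)
  moreover have "ln (real k / real (card S)) = - ln (real (card S) / real k)"
    using k S by (simp add: ln_div card_gt_0_iff)
  ultimately have "entropy_enn (pmf_of_set S) F
      = (\<integral>\<^sup>+\<omega>. ennreal (ln (real (card S) / real k)) \<partial>measure_pmf (pmf_of_set S))"
    unfolding entropy_enn_def using S by (intro nn_integral_cong_AE) (simp add: AE_measure_pmf_iff)
  then show ?thesis
    unfolding ent_map_pmf using nonneg by (simp add: measure_pmf.emeasure_space_1)
qed

section \<open>The entropy polymatroid of a distribution\<close>

lemma rv_eq_iff: "rv A \<omega> = rv A \<omega>' \<longleftrightarrow> (\<forall>i\<in>A. \<omega> i = \<omega>' i)"
  unfolding rv_def fun_eq_iff by (simp add: if_distrib) (metis)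

lemma jointrv_eq_iff: "jointrv M \<omega> = jointrv M \<omega>' \<longleftrightarrow> (\<forall>i\<in>\<Union>(set_mset M). \<omega> i = \<omega>' i)"
proof -
  have "jointrv M \<omega> = jointrv M \<omega>' \<longleftrightarrow> (\<forall>A. A \<in># M \<longrightarrow> rv A \<omega> = rv A \<omega>')"
    unfolding jointrv_def fun_eq_iff by auto
  then show ?thesis
    unfolding rv_eq_iff by blast
qed

definition joint_ent :: "(nat \<Rightarrow> nat) pmf \<Rightarrow> nat set \<Rightarrow> real" where
  "joint_ent P A = ent (map_pmf (rv A) P)"

definition total_corr :: "('a set \<Rightarrow> real) \<Rightarrow> 'a set \<Rightarrow> 'a set multiset \<Rightarrow> real" where
  "total_corr h C M =
     (\<Sum>Q\<in>#M. h (Q \<union> C) - h C) - (h (\<Union>(set_mset M) \<union> C) - h C)"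

lemma condent_rv: "condent P (rv Q) (rv C) = joint_ent P (Q \<union> C) - joint_ent P C"
proof -
  have "entropy_enn P (\<lambda>\<omega>. (rv Q \<omega>, rv C \<omega>)) = entropy_enn P (rv (Q \<union> C))"
    by (rule entropy_enn_cong) (auto simp: rv_eq_iff)
  then show ?thesis
    unfolding condent_def joint_ent_def ent_map_pmf by simp
qed

lemma condent_jointrv:
  "condent P (jointrv M) (rv C) = joint_ent P (\<Union>(set_mset M) \<union> C) - joint_ent P C"
proof -
  have "entropy_enn P (\<lambda>\<omega>. (jointrv M \<omega>, rv C \<omega>)) = entropy_enn P (rv (\<Union>(set_mset M) \<union> C))"
    by (rule entropy_enn_cong) (auto simp: rv_eq_iff jointrv_eq_iff)
  then show ?thesis
    unfolding condent_def joint_ent_def ent_map_pmf by simp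
qed

lemma valid_iff_total_corr: "valid P K \<longleftrightarrow> total_corr (joint_ent P) (fst K) (snd K) = 0"
  unfolding valid_def total_corr_def condent_rv condent_jointrv ..

lemma entropy_enn_rv_mono: "A \<subseteq> B \<Longrightarrow> entropy_enn P (rv A) \<le> entropy_enn P (rv B)"
  by (rule entropy_enn_mono) (auto simp: rv_eq_iff)

lemma entropy_enn_rv_submodular:
  "entropy_enn P (rv (A \<union> B)) + entropy_enn P (rv (A \<inter> B)) \<le> entropy_enn P (rv A) + entropy_enn P (rv B)"
proof -
  have "entropy_enn P (\<lambda>\<omega>. (rv (A - B) \<omega>, rv (B - A) \<omega>, rv (A \<inter> B) \<omega>)) + entropy_enn P (rv (A \<inter> B))
      \<le> entropy_enn P (\<lambda>\<omega>. (rv (A - B) \<omega>, rv (A \<inter> B) \<omega>))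
        + entropy_enn P (\<lambda>\<omega>. (rv (B - A) \<omega>, rv (A \<inter> B) \<omega>))"
    by (rule entropy_enn_submodular)
  moreover have "entropy_enn P (\<lambda>\<omega>. (rv (A - B) \<omega>, rv (B - A) \<omega>, rv (A \<inter> B) \<omega>))
      = entropy_enn P (rv (A \<union> B))"
    "entropy_enn P (\<lambda>\<omega>. (rv (A - B) \<omega>, rv (A \<inter> B) \<omega>)) = entropy_enn P (rv A)"
    "entropy_enn P (\<lambda>\<omega>. (rv (B - A) \<omega>, rv (A \<inter> B) \<omega>)) = entropy_enn P (rv B)"
    by (rule entropy_enn_cong; auto simp: rv_eq_iff)+
  ultimately show ?thesis
    by simp
qed

lemma entropy_enn_rv_finite:
  assumes P: "admissible n P" and A: "A \<subseteq> {1..n}"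
  shows "entropy_enn P (rv A) < \<infinity>"
proof -
  have "finite A"
    using A finite_subset by blast
  from this A show ?thesis
  proof (induction A rule: finite_induct)
    case empty
    have "entropy_enn P (rv {}) = 0"
      by (rule entropy_enn_const) (simp add: rv_def)
    then show ?case
      by simp
  next
    case (insert i A)
    have "entropy_enn P (\<lambda>\<omega>. \<omega> i) < \<infinity>"
      using P insert.prems unfolding admissible_def finite_ent_map_pmf by blast
    moreover have "entropy_enn P (rv {i}) = entropy_enn P (\<lambda>\<omega>. \<omega> i)"
      by (rule entropy_enn_cong) (simp add: rv_eq_iff)
    moreover have "entropy_enn P (rv (insert i A))
        \<le> entropy_enn P (rv ({i} \<union> A)) + entropy_enn P (rv ({i} \<inter> A))"
      by (rule add_increasing2) simp_all
    then have "entropy_enn P (rv (insert i A)) \<le> entropy_enn P (rv {i}) + entropy_enn P (rv A)"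
      using entropy_enn_rv_submodular[of P "{i}" A] by (rule order_trans)
    ultimately show ?case
      using insert by (simp add: order_le_less_trans ennreal_add_less_top)
  qed
qed

definition polymatroid :: "('a set \<Rightarrow> real) \<Rightarrow> bool" where
  "polymatroid h \<longleftrightarrow> (\<forall>A B. A \<subseteq> B \<longrightarrow> h A \<le> h B) \<and> (\<forall>A B. h (A \<union> B) + h (A \<inter> B) \<le> h A + h B)"

lemma polymatroid_mono: "polymatroid h \<Longrightarrow> A \<subseteq> B \<Longrightarrow> h A \<le> h B"
  unfolding polymatroid_def by blast

lemma polymatroid_submodular: "polymatroid h \<Longrightarrow> h (A \<union> B) + h (A \<inter> B) \<le> h A + h B"
  unfolding polymatroid_def by blast

lemma joint_ent_mono:
  assumes "admissible n P" "B \<subseteq> {1..n}" "A \<subseteq> B"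
  shows "joint_ent P A \<le> joint_ent P B"
  unfolding joint_ent_def ent_map_pmf
  using assms entropy_enn_rv_finite entropy_enn_rv_mono by (intro enn2real_mono) auto

lemma joint_ent_submodular:
  assumes P: "admissible n P" and "A \<subseteq> {1..n}" "B \<subseteq> {1..n}"
  shows "joint_ent P (A \<union> B) + joint_ent P (A \<inter> B) \<le> joint_ent P A + joint_ent P B"
proof -
  let ?H = "\<lambda>A. entropy_enn P (rv A)"
  have "?H X < \<infinity>" if "X \<subseteq> {1..n}" for X
    using entropy_enn_rv_finite[OF P that] .
  then have fin: "?H A < \<infinity>" "?H B < \<infinity>" "?H (A \<union> B) < \<infinity>" "?H (A \<inter> B) < \<infinity>"
    using assms by blast+
  have "enn2real (?H (A \<union> B) + ?H (A \<inter> B)) \<le> enn2real (?H A + ?H B)"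
    using fin entropy_enn_rv_submodular[of P A B] by (intro enn2real_mono) auto
  then show ?thesis
    unfolding joint_ent_def ent_map_pmf using fin by (simp add: enn2real_plus)
qed

text \<open>Restricted to {1..n}: other coordinates may have infinite entropy, where ent returns the
  junk value 0.\<close>
lemma polymatroid_joint_ent:
  assumes "admissible n P"
  shows "polymatroid (\<lambda>A. joint_ent P (A \<inter> {1..n}))"
  unfolding polymatroid_def
proof (intro conjI allI impI)
  fix A B :: "nat set"
  assume "A \<subseteq> B"
  then show "joint_ent P (A \<inter> {1..n}) \<le> joint_ent P (B \<inter> {1..n})"
    by (intro joint_ent_mono[OF assms]) auto
next
  fix A B :: "nat set"
  have "(A \<union> B) \<inter> {1..n} = (A \<inter> {1..n}) \<union> (B \<inter> {1..n})"
    "(A \<inter> B) \<inter> {1..n} = (A \<inter> {1..n}) \<inter> (B \<inter> {1..n})"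
    by auto
  then show "joint_ent P ((A \<union> B) \<inter> {1..n}) + joint_ent P ((A \<inter> B) \<inter> {1..n})
      \<le> joint_ent P (A \<inter> {1..n}) + joint_ent P (B \<inter> {1..n})"
    using joint_ent_submodular[OF assms, of "A \<inter> {1..n}" "B \<inter> {1..n}"] by simp
qed

lemma total_corr_cong:
  assumes "\<And>A. A \<subseteq> U \<Longrightarrow> h A = h' A" "C \<subseteq> U" "\<forall>Q\<in>#M. Q \<subseteq> U"
  shows "total_corr h C M = total_corr h' C M"
proof -
  have "image_mset (\<lambda>Q. h (Q \<union> C) - h C) M = image_mset (\<lambda>Q. h' (Q \<union> C) - h' C) M"
    using assms by (intro image_mset_cong) auto
  moreover have "\<Union>(set_mset M) \<union> C \<subseteq> U"
    using assms by auto
  then have "h (\<Union>(set_mset M) \<union> C) = h' (\<Union>(set_mset M) \<union> C)" "h C = h' C"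
    using assms by auto
  ultimately show ?thesis
    unfolding total_corr_def by simp
qed

lemma valid_iff_total_corr_restrict:
  assumes "cmi_on n K"
  shows "valid P K \<longleftrightarrow> total_corr (\<lambda>A. joint_ent P (A \<inter> {1..n})) (fst K) (snd K) = 0"
  unfolding valid_iff_total_corr using assms unfolding cmi_on_def
  by (subst total_corr_cong[where U = "{1..n}"]) (auto simp: Int_absorb2)

section \<open>Conditional mutual information and total correlation in a polymatroid\<close>

definition cond_mutual_info :: "('a set \<Rightarrow> real) \<Rightarrow> 'a set \<Rightarrow> 'a set \<Rightarrow> 'a set \<Rightarrow> real" where
  "cond_mutual_info h A B C = h (A \<union> C) + h (B \<union> C) - h (A \<union> B \<union> C) - h C"

lemma cond_mutual_info_nonneg:
  assumes "polymatroid h"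
  shows "0 \<le> cond_mutual_info h A B C"
proof -
  have "h ((A \<union> C) \<union> (B \<union> C)) + h ((A \<union> C) \<inter> (B \<union> C)) \<le> h (A \<union> C) + h (B \<union> C)"
    by (rule polymatroid_submodular[OF assms])
  moreover have "h C \<le> h ((A \<union> C) \<inter> (B \<union> C))"
    by (rule polymatroid_mono[OF assms]) auto
  moreover have "(A \<union> C) \<union> (B \<union> C) = A \<union> B \<union> C"
    by auto
  ultimately show ?thesis
    unfolding cond_mutual_info_def by simp
qed

lemma cond_mutual_info_commute: "cond_mutual_info h A B C = cond_mutual_info h B A C"
  unfolding cond_mutual_info_def by (simp add: Un_ac)

lemma cond_mutual_info_self: "cond_mutual_info h A A C = h (A \<union> C) - h C"
  unfolding cond_mutual_info_def by simp

lemma cond_mutual_info_chain: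
  "cond_mutual_info h (A \<union> X) B C = cond_mutual_info h X B C + cond_mutual_info h A B (C \<union> X)"
proof -
  have "A \<union> X \<union> C = A \<union> (C \<union> X)" "A \<union> X \<union> B \<union> C = A \<union> B \<union> (C \<union> X)"
    "B \<union> (C \<union> X) = X \<union> B \<union> C" "C \<union> X = X \<union> C"
    by auto
  then show ?thesis
    unfolding cond_mutual_info_def by simp
qed

lemma cond_mutual_info_le_cond:
  assumes "polymatroid h"
  shows "cond_mutual_info h A B (C \<union> X) \<le> cond_mutual_info h (A \<union> X) B C"
  using cond_mutual_info_chain[of h A X B C] cond_mutual_info_nonneg[OF assms, of X B C] by simp

lemma cond_mutual_info_mono:
  assumes h: "polymatroid h" and "A \<subseteq> A'" "B \<subseteq> B'"
  shows "cond_mutual_info h A B C \<le> cond_mutual_info h A' B' C"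
proof -
  have mono_left: "cond_mutual_info h A B C \<le> cond_mutual_info h A' B C"
    if "A \<subseteq> A'" for A A' B
    using cond_mutual_info_chain[of h A' A B C] cond_mutual_info_nonneg[OF h, of A' B "C \<union> A"] that
    by (simp add: Un_absorb2)
  show ?thesis
    using mono_left[of A A' B] mono_left[of B B' A'] assms
    by (simp add: cond_mutual_info_commute[of h _ A'])
qed

text \<open>Moving the parts of the condition that lie in S1 or S2 into the two sides.\<close>
lemma cond_mutual_info_le_uncond:
  assumes h: "polymatroid h" and "C \<subseteq> E" "E \<subseteq> C \<union> S1 \<union> S2" "A \<subseteq> S1" "B \<subseteq> S2"
  shows "cond_mutual_info h A B E \<le> cond_mutual_info h S1 S2 C"
proof -
  define W1 where "W1 = (E - C) \<inter> S1"
  define W2 where "W2 = (E - C) \<inter> S2"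
  have "E = (C \<union> W2) \<union> W1"
    using assms unfolding W1_def W2_def by auto
  then have "cond_mutual_info h A B E = cond_mutual_info h A B ((C \<union> W2) \<union> W1)"
    by simp
  also have "\<dots> \<le> cond_mutual_info h (A \<union> W1) B (C \<union> W2)"
    by (rule cond_mutual_info_le_cond[OF h])
  also have "\<dots> = cond_mutual_info h B (A \<union> W1) (C \<union> W2)"
    by (rule cond_mutual_info_commute)
  also have "\<dots> \<le> cond_mutual_info h (B \<union> W2) (A \<union> W1) C"
    by (rule cond_mutual_info_le_cond[OF h])
  also have "\<dots> \<le> cond_mutual_info h S2 S1 C"
    using assms by (intro cond_mutual_info_mono[OF h]) (auto simp: W1_def W2_def)
  finally show ?thesis
    by (simp add: cond_mutual_info_commute)
qed

lemma total_corr_empty [simp]: "total_corr h C {#} = 0"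
  unfolding total_corr_def by simp

lemma total_corr_union:
  "total_corr h C (M1 + M2) = total_corr h C M1 + total_corr h C M2
     + cond_mutual_info h (\<Union>(set_mset M1)) (\<Union>(set_mset M2)) C"
  unfolding total_corr_def cond_mutual_info_def by (simp add: Un_assoc)

lemma total_corr_add_mset:
  "total_corr h C (add_mset Q M) = total_corr h C M + cond_mutual_info h Q (\<Union>(set_mset M)) C"
  using total_corr_union[of h C "{#Q#}" M] by (simp add: total_corr_def)

lemma total_corr_nonneg:
  assumes "polymatroid h"
  shows "0 \<le> total_corr h C M"
  by (induction M) (simp_all add: total_corr_add_mset cond_mutual_info_nonneg[OF assms])

lemma cond_mutual_info_le_total_corr:
  assumes "polymatroid h"
  shows "cond_mutual_info h (\<Union>(set_mset M1)) (\<Union>(set_mset M2)) C \<le> total_corr h C (M1 + M2)"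
  using total_corr_union[of h C M1 M2] total_corr_nonneg[OF assms, of C M1]
    total_corr_nonneg[OF assms, of C M2] by linarith

lemma total_corr_size_le_1: "size M \<le> 1 \<Longrightarrow> total_corr h C M = 0"
  by (cases M) (auto simp: total_corr_add_mset cond_mutual_info_def)

lemma total_corr_filter_nonempty: "total_corr h C (filter_mset (\<lambda>A. A \<noteq> {}) M) = total_corr h C M"
proof (induction M)
  case (add Q M)
  have "\<Union>(set_mset (filter_mset (\<lambda>A. A \<noteq> {}) M)) = \<Union>(set_mset M)"
    by auto
  then show ?case
    using add by (auto simp: total_corr_add_mset cond_mutual_info_def)
qed simp

lemma total_corr_transfer:
  assumes "\<And>X. h (X \<union> E) = h' ((X - I) \<union> E')"
  shows "total_corr h E M = total_corr h' E' (image_mset (\<lambda>Q. Q - I) M)"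
proof -
  have "h E = h' E'"
    using assms[of "{}"] by simp
  moreover have "\<Union>(set_mset (image_mset (\<lambda>Q. Q - I) M)) = \<Union>(set_mset M) - I"
    by auto
  ultimately show ?thesis
    unfolding total_corr_def by (simp add: image_mset.compositionality o_def assms)
qed

lemma total_corr_diff_cond: "total_corr h C (image_mset (\<lambda>Q. Q - C) M) = total_corr h C M"
  using total_corr_transfer[of h C h C C M] by simp

lemma polymatroid_absorb:
  assumes h: "polymatroid h" and I: "h (I \<union> C) = h C" and "C \<subseteq> Y"
  shows "h (Y \<union> I) = h Y"
proof -
  have "h (Y \<union> (I \<union> C)) + h (Y \<inter> (I \<union> C)) \<le> h Y + h (I \<union> C)"
    by (rule polymatroid_submodular[OF h])
  moreover have "h C \<le> h (Y \<inter> (I \<union> C))" "h Y \<le> h (Y \<union> I)"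
    using assms by (auto intro: polymatroid_mono[OF h])
  moreover have "Y \<union> (I \<union> C) = Y \<union> I"
    using assms by auto
  ultimately show ?thesis
    using I by simp
qed

lemma total_corr_absorb:
  assumes h: "polymatroid h" and I: "h (I \<union> C) = h C" and "C \<subseteq> E" "C \<inter> I = {}"
  shows "total_corr h E M = total_corr h (E - I) (image_mset (\<lambda>Q. Q - I) M)"
proof (rule total_corr_transfer)
  fix X
  have "X \<union> E \<union> I = ((X - I) \<union> (E - I)) \<union> I"
    by auto
  moreover have "C \<subseteq> X \<union> E" "C \<subseteq> (X - I) \<union> (E - I)"
    using assms by auto
  ultimately show "h (X \<union> E) = h ((X - I) \<union> (E - I))"
    using polymatroid_absorb[OF h I] by metis
qed

lemma polymatroid_determined_Union:
  assumes h: "polymatroid h" and "finite I" and "\<And>i. i \<in> I \<Longrightarrow> h ({i} \<union> C) = h C"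
  shows "h (I \<union> C) = h C"
  using assms(2,3)
proof (induction I rule: finite_induct)
  case (insert i J)
  then have "h (J \<union> C \<union> {i}) = h (J \<union> C)"
    by (intro polymatroid_absorb[OF h, of "{i}" C]) auto
  then show ?case
    using insert by simp
qed simp

section \<open>Canonical forms of CMIs\<close>

lemma size_filter_mset_ge2E:
  assumes "2 \<le> size (filter_mset P M)"
  obtains X Y R where "M = add_mset X (add_mset Y R)" "P X" "P Y"
proof -
  have "0 < size (filter_mset P M)"
    using assms by linarith
  then obtain X where "X \<in># filter_mset P M"
    by (metis multiset_nonemptyE nonempty_has_size)
  then have X: "X \<in># M" "P X"
    by simp_all
  then obtain M1 where M1: "M = add_mset X M1"
    by (blast dest: multi_member_split)
  then have "0 < size (filter_mset P M1)"
    using assms X(2) by simp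
  then obtain Y where "Y \<in># filter_mset P M1"
    by (metis multiset_nonemptyE nonempty_has_size)
  then have Y: "Y \<in># M1" "P Y"
    by simp_all
  then obtain R where "M1 = add_mset Y R"
    by (blast dest: multi_member_split)
  then show ?thesis
    using that M1 X(2) Y(2) by blast
qed

lemma size_filter_mset_ge2I:
  assumes "X \<in># M" "Y \<in># M - {#X#}" "P X" "P Y"
  shows "2 \<le> size (filter_mset P M)"
proof -
  obtain M1 where M1: "M = add_mset X M1"
    using assms(1) by (blast dest: multi_member_split)
  moreover obtain R where "M1 = add_mset Y R"
    using assms(2) M1 by (auto dest: multi_member_split)
  ultimately show ?thesis
    using assms(3,4) by simp
qed

lemma mset_other_member:
  assumes "2 \<le> size M" "x \<in># M"
  obtains y where "y \<in># M - {#x#}"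
proof -
  have "0 < size (M - {#x#})"
    using assms by (simp add: size_Diff_singleton)
  then show ?thesis
    using that by (metis multiset_nonemptyE nonempty_has_size)
qed

lemma mem_repI_iff: "i \<in> repI M \<longleftrightarrow> 2 \<le> size (filter_mset (\<lambda>Q. i \<in> Q) M)"
  unfolding repI_def by (auto dest: order_trans[OF _ size_filter_mset_lesseq])

lemma repI_subset_Union: "repI M \<subseteq> \<Union>(set_mset M)"
  by (auto simp: mem_repI_iff elim!: size_filter_mset_ge2E)

lemma mem_Pparts_iff: "X \<in># Pparts I M \<longleftrightarrow> X \<noteq> {} \<and> (\<exists>Q. Q \<in># M \<and> X = Q - I)"
  unfolding Pparts_def by auto

lemma size_filter_Pparts_le:
  assumes "\<And>Q. P (Q - I) \<Longrightarrow> P' Q"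
  shows "size (filter_mset P (Pparts I M)) \<le> size (filter_mset P' M)"
  unfolding Pparts_def using assms by (induction M) auto

lemma Pparts_Pparts: "J \<subseteq> I \<Longrightarrow> Pparts I (Pparts J M) = Pparts I M"
  unfolding Pparts_def by (induction M) auto

lemma Pparts_empty: "(\<And>X. X \<in># M \<Longrightarrow> X \<noteq> {}) \<Longrightarrow> Pparts {} M = M"
  unfolding Pparts_def by (induction M) auto

lemma repI_Pparts: "repI M \<subseteq> I \<Longrightarrow> repI (Pparts I M) = {}"
proof (rule ccontr)
  assume I: "repI M \<subseteq> I" and "repI (Pparts I M) \<noteq> {}"
  then obtain i where i: "2 \<le> size (filter_mset (\<lambda>A. i \<in> A) (Pparts I M))"
    by (auto simp: mem_repI_iff)
  then obtain X Y R where "Pparts I M = add_mset X (add_mset Y R)" "i \<in> X"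
    by (rule size_filter_mset_ge2E)
  then have "i \<notin> I"
    using mem_Pparts_iff[of X I M] by auto
  moreover have "i \<in> repI M"
    using i size_filter_Pparts_le[of "\<lambda>A. i \<in> A" I "\<lambda>Q. i \<in> Q" M]
    by (simp add: mem_repI_iff)
  ultimately show False
    using I by blast
qed

lemma Pparts_repI_disjoint:
  assumes "X \<in># Pparts (repI M) M" "Y \<in># Pparts (repI M) M - {#X#}"
  shows "X \<inter> Y = {}"
proof (rule ccontr)
  assume "X \<inter> Y \<noteq> {}"
  then obtain x where x: "x \<in> X" "x \<in> Y"
    by auto
  then have "2 \<le> size (filter_mset (\<lambda>A. x \<in> A) (Pparts (repI M) M))"
    using assms by (intro size_filter_mset_ge2I)
  then have "x \<in> repI M"
    using size_filter_Pparts_le[of "\<lambda>A. x \<in> A" "repI M" "\<lambda>Q. x \<in> Q" M]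
    by (auto simp: mem_repI_iff)
  then show False
    using assms(1) x(1) by (auto simp: mem_Pparts_iff)
qed

lemma fst_pur [simp]: "fst (pur K) = fst K"
  by (simp add: pur_def)

lemma snd_pur: "snd (pur K) = filter_mset (\<lambda>Q. Q \<noteq> {}) (image_mset (\<lambda>Q. Q - fst K) (snd K))"
  by (simp add: pur_def)

lemma mem_snd_pur:
  assumes "Q \<in># snd (pur K)"
  shows "Q \<noteq> {} \<and> Q \<inter> fst K = {} \<and> (\<exists>Q0. Q0 \<in># snd K \<and> Q = Q0 - fst K)"
  using assms unfolding snd_pur by auto

lemma mem_snd_pur_subset: "cmi_on n K \<Longrightarrow> Q \<in># snd (pur K) \<Longrightarrow> Q \<subseteq> {1..n}"
  using mem_snd_pur[of Q K] unfolding cmi_on_def by blast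

lemma total_corr_pur: "total_corr h (fst K) (snd K) = total_corr h (fst K) (snd (pur K))"
  unfolding snd_pur total_corr_filter_nonempty total_corr_diff_cond ..

lemma cmiI_disjoint_fst: "cmiI K \<inter> fst K = {}"
  using repI_subset_Union[of "snd (pur K)"] mem_snd_pur[of _ K] unfolding cmiI_def by blast

lemma cmiI_subset: "cmi_on n K \<Longrightarrow> cmiI K \<subseteq> {1..n}"
  using repI_subset_Union[of "snd (pur K)"] mem_snd_pur_subset[of n K] unfolding cmiI_def by blast

lemma mem_cmiP:
  assumes "X \<in># cmiP K"
  shows "X \<noteq> {} \<and> X \<inter> fst K = {} \<and> X \<inter> cmiI K = {} \<and> (\<exists>Q. Q \<in># snd (pur K) \<and> X = Q - cmiI K)"
  using assms mem_snd_pur[of _ K] unfolding cmiP_def mem_Pparts_iff by blast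

lemma cmiP_disjoint: "X \<in># cmiP K \<Longrightarrow> Y \<in># cmiP K - {#X#} \<Longrightarrow> X \<inter> Y = {}"
  unfolding cmiP_def cmiI_def by (rule Pparts_repI_disjoint)

lemma diff_cmiI_mem_cmiP: "Q \<in># snd (pur K) \<Longrightarrow> Q - cmiI K \<noteq> {} \<Longrightarrow> Q - cmiI K \<in># cmiP K"
  unfolding cmiP_def mem_Pparts_iff by blast

lemma mem_snd_pur_subset_cmiI_cmiP:
  "Q \<in># snd (pur K) \<Longrightarrow> Q \<subseteq> cmiI K \<union> \<Union>(set_mset (cmiP K))"
  using diff_cmiI_mem_cmiP[of Q K] by blast

lemma Pparts_cmiP: "cmiI K' \<subseteq> I \<Longrightarrow> Pparts I (cmiP K') = Pparts I (snd (pur K'))"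
  unfolding cmiP_def by (rule Pparts_Pparts)

lemma mem_Pparts_cmiP:
  assumes "X \<in># Pparts I (cmiP K')"
  shows "X \<noteq> {} \<and> X \<inter> fst K' = {} \<and> X \<inter> I = {} \<and> X \<inter> cmiI K' = {}"
  using assms mem_cmiP[of _ K'] unfolding mem_Pparts_iff by blast

lemma snd_pur_eq: "(\<And>X. X \<in># M \<Longrightarrow> X \<noteq> {} \<and> X \<inter> C = {}) \<Longrightarrow> snd (pur (C, M)) = M"
  unfolding snd_pur by (induction M) (auto simp: Diff_triv)

lemma snd_pur_Pparts_cmiP: "snd (pur (fst K' - I, Pparts I (cmiP K'))) = Pparts I (cmiP K')"
  using mem_Pparts_cmiP by (intro snd_pur_eq) blast

lemma canpur_None [simp]: "canpur None = None"
  by (simp add: canpur_def)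

lemma canpur_Some_eq_None_iff: "canpur (Some K) = None \<longleftrightarrow> size (snd (pur K)) \<le> 1"
  by (simp add: canpur_def can_def Let_def)

lemma Rcond_if_repeated_subset:
  assumes "cmiI K' \<subseteq> cmiI K"
  shows "Rcond K K' = (if size (Pparts (cmiI K) (cmiP K')) \<le> 1 then None
           else Some (fst K' - cmiI K, Pparts (cmiI K) (cmiP K')))"
  using assms unfolding Rcond_def Let_def by simp

lemma Rcond_if_not_repeated_subset:
  assumes "\<not> cmiI K' \<subseteq> cmiI K"
  obtains K3 where "Rcond K K' = Some K3" "2 \<le> size (snd (pur K3))" "cmiI K3 \<noteq> {}"
proof -
  define D where "D = cmiI K' - cmiI K"
  define T where "T = Pparts (cmiI K) (cmiP K')"
  define C3 where "C3 = fst K' - cmiI K"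
  define K3 where "K3 = (C3, {#D, D#} + (if size T \<le> 1 then {#} else T))"
  have D: "D \<noteq> {}" "D \<inter> C3 = {}"
    using assms cmiI_disjoint_fst[of K'] unfolding D_def C3_def by auto
  then have pur: "snd (pur K3) = {#D, D#} + snd (pur (C3, if size T \<le> 1 then {#} else T))"
    unfolding K3_def snd_pur by (simp add: Diff_triv)
  have "Rcond K K' = Some K3"
    using assms unfolding Rcond_def Let_def K3_def D_def T_def C3_def by auto
  moreover have "2 \<le> size (snd (pur K3))"
    unfolding pur by simp
  moreover have "D \<subseteq> cmiI K3"
    unfolding cmiI_def pur by (auto simp: mem_repI_iff)
  ultimately show ?thesis
    using that D by blast
qed

lemma canpur_Rcond_eq_None_iff:
  "canpur (Rcond K K') = None \<longleftrightarrow> cmiI K' \<subseteq> cmiI K \<and> size (Pparts (cmiI K) (cmiP K')) \<le> 1"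
proof (cases "cmiI K' \<subseteq> cmiI K")
  case True
  then show ?thesis
    using Rcond_if_repeated_subset[OF True] by (simp add: canpur_Some_eq_None_iff snd_pur_Pparts_cmiP)
next
  case False
  then obtain K3 where "Rcond K K' = Some K3" "2 \<le> size (snd (pur K3))"
    by (rule Rcond_if_not_repeated_subset)
  then show ?thesis
    using False by (simp add: canpur_Some_eq_None_iff)
qed

lemma cmiI_Rcond_parts:
  assumes "cmiI K' \<subseteq> cmiI K"
  shows "cmiI (fst K' - cmiI K, Pparts (cmiI K) (cmiP K')) = {}"
proof -
  have "cmiI (fst K' - cmiI K, Pparts (cmiI K) (cmiP K')) = repI (Pparts (cmiI K) (snd (pur K')))"
    using assms unfolding cmiI_def[of "(_, _)"] snd_pur_Pparts_cmiP by (simp add: Pparts_cmiP)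
  also have "\<dots> = {}"
    using assms unfolding cmiI_def by (rule repI_Pparts)
  finally show ?thesis .
qed

lemma cmiP_Rcond_parts:
  assumes "cmiI K' \<subseteq> cmiI K"
  shows "cmiP (fst K' - cmiI K, Pparts (cmiI K) (cmiP K')) = Pparts (cmiI K) (cmiP K')"
  unfolding cmiP_def[of "(_, _)"] cmiI_Rcond_parts[OF assms] snd_pur_Pparts_cmiP
  using mem_Pparts_cmiP by (intro Pparts_empty) blast

lemma Rcond_eq_Some_no_repeated_iff:
  "Rcond K K' = Some K3 \<and> cmiI K3 = {} \<longleftrightarrow>
     cmiI K' \<subseteq> cmiI K \<and> 2 \<le> size (Pparts (cmiI K) (cmiP K'))
     \<and> K3 = (fst K' - cmiI K, Pparts (cmiI K) (cmiP K'))"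
proof (cases "cmiI K' \<subseteq> cmiI K")
  case True
  then show ?thesis
    using Rcond_if_repeated_subset[OF True] cmiI_Rcond_parts[OF True] by auto
next
  case False
  then obtain K4 where "Rcond K K' = Some K4" "cmiI K4 \<noteq> {}"
    by (rule Rcond_if_not_repeated_subset)
  then show ?thesis
    using False by auto
qed

definition parts_separated :: "'a set multiset \<Rightarrow> 'a set multiset \<Rightarrow> bool" where
  "parts_separated T Ps \<longleftrightarrow>
     (\<forall>A B m1 m2. A \<in># T \<and> B \<in># T - {#A#} \<and> m1 \<in> A \<and> m2 \<in> B \<longrightarrow>
        (\<exists>X Y. X \<in># Ps \<and> Y \<in># Ps - {#X#} \<and> m1 \<in> X \<and> m2 \<in> Y))"

text \<open>Conditions (ii) and (iii) of a sub-CMI, with R_K^{K'} and its canonical form computed: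
  its conditioning set is fst K' - cmiI K and its P-parts are Pparts (cmiI K) (cmiP K').\<close>
definition sub_cmi_explicit :: "cmi \<Rightarrow> cmi \<Rightarrow> bool" where
  "sub_cmi_explicit K' K \<longleftrightarrow>
     fst K \<subseteq> fst K' \<and> cmiI K' \<subseteq> cmiI K \<and>
     (size (Pparts (cmiI K) (cmiP K')) \<le> 1 \<or>
      \<Union>(set_mset (Pparts (cmiI K) (cmiP K'))) \<subseteq> \<Union>(set_mset (cmiP K)) \<and>
      fst K' - cmiI K \<subseteq> fst K \<union> \<Union>(set_mset (cmiP K)) \<and>
      parts_separated (Pparts (cmiI K) (cmiP K')) (cmiP K))"

lemma sub_cmi_condition_iii_iff:
  fixes K K' :: cmi
  defines "T \<equiv> Pparts (cmiI K) (cmiP K')" and "C3 \<equiv> fst K' - cmiI K"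
    and "P \<equiv> \<Union>(set_mset (cmiP K))"
  shows "(\<exists>K3. Rcond K K' = Some K3 \<and> canpur (Some K3) \<noteq> None \<and> cmiI K3 = {}
      \<and> \<Union>(set_mset (cmiP K3)) \<subseteq> P \<and> fst K \<subseteq> fst K3
      \<and> fst K3 \<subseteq> (fst K \<union> P) - \<Union>(set_mset (cmiP K3)) \<and> parts_separated (cmiP K3) (cmiP K))
    \<longleftrightarrow> cmiI K' \<subseteq> cmiI K \<and> 2 \<le> size T \<and> \<Union>(set_mset T) \<subseteq> P \<and> fst K \<subseteq> fst K'
      \<and> C3 \<subseteq> fst K \<union> P \<and> parts_separated T (cmiP K)"
    (is "?lhs \<longleftrightarrow> ?rhs")
proof
  have C3_iff: "fst K \<subseteq> C3 \<longleftrightarrow> fst K \<subseteq> fst K'"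
    using cmiI_disjoint_fst[of K] unfolding C3_def by auto
  assume ?lhs
  then obtain K3 where K3: "Rcond K K' = Some K3" "cmiI K3 = {}" "\<Union>(set_mset (cmiP K3)) \<subseteq> P"
    "fst K \<subseteq> fst K3" "fst K3 \<subseteq> (fst K \<union> P) - \<Union>(set_mset (cmiP K3))"
    "parts_separated (cmiP K3) (cmiP K)"
    by blast
  then have sub: "cmiI K' \<subseteq> cmiI K" and "2 \<le> size T" and eq: "K3 = (C3, T)"
    using Rcond_eq_Some_no_repeated_iff[of K K' K3] unfolding T_def C3_def by blast+
  moreover have "cmiP K3 = T"
    unfolding eq C3_def T_def using sub by (rule cmiP_Rcond_parts)
  ultimately show ?rhs
    using K3 C3_iff by auto
next
  have C3_iff: "fst K \<subseteq> C3 \<longleftrightarrow> fst K \<subseteq> fst K'"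
    using cmiI_disjoint_fst[of K] unfolding C3_def by auto
  have T_C3: "\<Union>(set_mset T) \<inter> C3 = {}"
    using mem_Pparts_cmiP[of _ "cmiI K" K'] unfolding C3_def T_def by blast
  have canpur_iff: "canpur (Some (C3, T)) \<noteq> None \<longleftrightarrow> 2 \<le> size T"
    unfolding canpur_Some_eq_None_iff C3_def T_def snd_pur_Pparts_cmiP by auto
  assume ?rhs
  then have sub: "cmiI K' \<subseteq> cmiI K"
    by blast
  have "Rcond K K' = Some (C3, T)" "cmiI (C3, T) = {}"
    using \<open>?rhs\<close> Rcond_eq_Some_no_repeated_iff[of K K' "(C3, T)"] unfolding T_def C3_def by blast+
  moreover have "cmiP (C3, T) = T"
    unfolding C3_def T_def using sub by (rule cmiP_Rcond_parts)
  ultimately show ?lhs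
    using \<open>?rhs\<close> C3_iff T_C3 canpur_iff by (intro exI[of _ "(C3, T)"]) auto
qed

lemma sub_cmi_iff_explicit: "sub_cmi n K' K \<longleftrightarrow> degenerate n K' \<or> sub_cmi_explicit K' K"
  unfolding sub_cmi_def parts_separated_def[symmetric] sub_cmi_condition_iii_iff canpur_Rcond_eq_None_iff
    sub_cmi_explicit_def
  by auto

section \<open>The sub-CMI conditions are sufficient\<close>

lemma total_corr_eq_0_repeated_determined:
  assumes h: "polymatroid h" and "total_corr h C M = 0" and "i \<in> repI M"
  shows "h ({i} \<union> C) = h C"
proof -
  obtain Qa Qb R where M: "M = add_mset Qa (add_mset Qb R)" and i: "i \<in> Qa" "i \<in> Qb"
    using assms(3) unfolding mem_repI_iff by (rule size_filter_mset_ge2E)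
  have "h ({i} \<union> C) - h C = cond_mutual_info h {i} {i} C"
    by (simp add: cond_mutual_info_self)
  also have "\<dots> \<le> cond_mutual_info h Qa (\<Union>(set_mset (add_mset Qb R))) C"
    using i by (intro cond_mutual_info_mono[OF h]) auto
  also have "\<dots> \<le> total_corr h C M"
    using cond_mutual_info_le_total_corr[OF h, of "{#Qa#}" "add_mset Qb R" C] M
    by (simp add: add_mset_commute)
  also have "\<dots> = 0"
    by (fact assms(2))
  finally have "h ({i} \<union> C) \<le> h C"
    by simp
  moreover have "h C \<le> h ({i} \<union> C)"
    by (rule polymatroid_mono[OF h]) auto
  ultimately show ?thesis
    by linarith
qed

lemma cmiI_determined:
  assumes h: "polymatroid h" and "cmi_on n K" and "total_corr h (fst K) (snd K) = 0"
  shows "h (cmiI K \<union> fst K) = h (fst K)"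
proof (rule polymatroid_determined_Union[OF h])
  show "finite (cmiI K)"
    using cmiI_subset[OF assms(2)] finite_subset by blast
  show "h ({i} \<union> fst K) = h (fst K)" if "i \<in> cmiI K" for i
    using assms(3) that unfolding total_corr_pur[of h K] cmiI_def
    by (rule total_corr_eq_0_repeated_determined[OF h])
qed

lemma total_corr_cmiP:
  assumes h: "polymatroid h" and I: "h (cmiI K \<union> fst K) = h (fst K)"
  shows "total_corr h (fst K) (snd K) = total_corr h (fst K) (cmiP K)"
proof -
  have "total_corr h (fst K) (snd K) = total_corr h (fst K) (snd (pur K))"
    by (rule total_corr_pur)
  also have "\<dots> = total_corr h (fst K - cmiI K) (image_mset (\<lambda>Q. Q - cmiI K) (snd (pur K)))"
    using cmiI_disjoint_fst[of K] by (intro total_corr_absorb[OF h I]) auto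
  also have "\<dots> = total_corr h (fst K) (cmiP K)"
    using cmiI_disjoint_fst[of K]
    by (simp add: cmiP_def Pparts_def total_corr_filter_nonempty Diff_triv Int_commute)
  finally show ?thesis .
qed

lemma total_corr_Rcond_parts:
  assumes h: "polymatroid h" and I: "h (cmiI K \<union> fst K) = h (fst K)"
    and "fst K \<subseteq> fst K'" "cmiI K' \<subseteq> cmiI K"
  shows "total_corr h (fst K') (snd K') = total_corr h (fst K' - cmiI K) (Pparts (cmiI K) (cmiP K'))"
proof -
  have "total_corr h (fst K') (snd K') = total_corr h (fst K') (snd (pur K'))"
    by (rule total_corr_pur)
  also have "\<dots> = total_corr h (fst K' - cmiI K) (image_mset (\<lambda>Q. Q - cmiI K) (snd (pur K')))"
    using assms(3) cmiI_disjoint_fst[of K] by (intro total_corr_absorb[OF h I]) auto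
  also have "\<dots> = total_corr h (fst K' - cmiI K) (Pparts (cmiI K) (cmiP K'))"
    unfolding Pparts_cmiP[OF assms(4)] unfolding Pparts_def total_corr_filter_nonempty ..
  finally show ?thesis .
qed

lemma disjoint_members_eq:
  assumes "\<And>X Y. X \<in># Ps \<Longrightarrow> Y \<in># Ps - {#X#} \<Longrightarrow> X \<inter> Y = {}"
    and "X \<in># Ps" "Z \<in># Ps" "x \<in> X" "x \<in> Z"
  shows "X = Z"
proof (rule ccontr)
  assume "X \<noteq> Z"
  then have "Z \<in># Ps - {#X#}"
    using assms(3) by (simp add: in_diff_count)
  then show False
    using assms by blast
qed

lemma parts_separated_add_mset_D:
  assumes "parts_separated (add_mset t T) Ps"
  shows "parts_separated T Ps"
  unfolding parts_separated_def
proof (intro allI impI)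
  fix A B m1 m2
  assume "A \<in># T \<and> B \<in># T - {#A#} \<and> m1 \<in> A \<and> m2 \<in> B"
  then have "A \<in># add_mset t T \<and> B \<in># add_mset t T - {#A#} \<and> m1 \<in> A \<and> m2 \<in> B"
    by (auto simp: in_diff_count)
  then show "\<exists>X Y. X \<in># Ps \<and> Y \<in># Ps - {#X#} \<and> m1 \<in> X \<and> m2 \<in> Y"
    using assms unfolding parts_separated_def by blast
qed

lemma parts_separated_no_common_part:
  assumes disj: "\<And>X Y. X \<in># Ps \<Longrightarrow> Y \<in># Ps - {#X#} \<Longrightarrow> X \<inter> Y = {}"
    and sep: "parts_separated (add_mset t T) Ps"
    and "B \<in># T" "Q \<in># Ps" "m1 \<in> Q" "m1 \<in> t" "m2 \<in> Q" "m2 \<in> B"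
  shows False
proof -
  have "t \<in># add_mset t T" "B \<in># add_mset t T - {#t#}"
    using assms(3) by simp_all
  then obtain X Y where XY: "X \<in># Ps" "Y \<in># Ps - {#X#}" "m1 \<in> X" "m2 \<in> Y"
    using sep assms(6,8) unfolding parts_separated_def by blast
  then have "Y \<in># Ps"
    by (meson in_diffD)
  then have "X = Q" "Y = Q"
    using disjoint_members_eq[OF disj XY(1) assms(4) XY(3) assms(5)]
      disjoint_members_eq[OF disj _ assms(4) XY(4) assms(7)] by simp_all
  then show False
    using disj XY assms(5) by blast
qed

lemma cond_mutual_info_eq_0_if_parts_separated:
  assumes h: "polymatroid h" and Ps: "total_corr h C Ps = 0"
    and disj: "\<And>X Y. X \<in># Ps \<Longrightarrow> Y \<in># Ps - {#X#} \<Longrightarrow> X \<inter> Y = {}"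
    and E: "C \<subseteq> E" "E \<subseteq> C \<union> \<Union>(set_mset Ps)"
    and T: "\<Union>(set_mset (add_mset t T)) \<subseteq> \<Union>(set_mset Ps)" "parts_separated (add_mset t T) Ps"
  shows "cond_mutual_info h t (\<Union>(set_mset T)) E = 0"
proof -
  define Pt where "Pt = filter_mset (\<lambda>Q. Q \<inter> t \<noteq> {}) Ps"
  define Pr where "Pr = filter_mset (\<lambda>Q. \<not> Q \<inter> t \<noteq> {}) Ps"
  have Ps_split: "Ps = Pt + Pr"
    unfolding Pt_def Pr_def by (rule multiset_partition)
  have "t \<subseteq> \<Union>(set_mset Pt)"
  proof
    fix x
    assume x: "x \<in> t"
    then have "x \<in> \<Union>(set_mset Ps)"
      using T(1) by auto
    then obtain Q where "Q \<in># Ps" "x \<in> Q"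
      by blast
    then show "x \<in> \<Union>(set_mset Pt)"
      using x unfolding Pt_def by auto
  qed
  moreover have "\<Union>(set_mset T) \<subseteq> \<Union>(set_mset Pr)"
  proof
    fix m2
    assume "m2 \<in> \<Union>(set_mset T)"
    then obtain B where B: "B \<in># T" "m2 \<in> B"
      by blast
    then have "m2 \<in> \<Union>(set_mset Ps)"
      using T(1) by auto
    then obtain Q where Q: "Q \<in># Ps" "m2 \<in> Q"
      by blast
    then have "Q \<inter> t = {}"
      using parts_separated_no_common_part[OF disj T(2) B(1) Q(1) _ _ Q(2) B(2)] by blast
    then show "m2 \<in> \<Union>(set_mset Pr)"
      using Q unfolding Pr_def by auto
  qed
  moreover have "E \<subseteq> C \<union> \<Union>(set_mset Pt) \<union> \<Union>(set_mset Pr)"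
    using E(2) unfolding Ps_split by auto
  ultimately have "cond_mutual_info h t (\<Union>(set_mset T)) E
      \<le> cond_mutual_info h (\<Union>(set_mset Pt)) (\<Union>(set_mset Pr)) C"
    using E(1) by (intro cond_mutual_info_le_uncond[OF h])
  also have "\<dots> \<le> total_corr h C Ps"
    unfolding Ps_split by (rule cond_mutual_info_le_total_corr[OF h])
  finally show ?thesis
    using Ps cond_mutual_info_nonneg[OF h, of t "\<Union>(set_mset T)" E] by linarith
qed

lemma total_corr_eq_0_if_parts_separated:
  assumes h: "polymatroid h" and Ps: "total_corr h C Ps = 0"
    and disj: "\<And>X Y. X \<in># Ps \<Longrightarrow> Y \<in># Ps - {#X#} \<Longrightarrow> X \<inter> Y = {}"
    and E: "C \<subseteq> E" "E \<subseteq> C \<union> \<Union>(set_mset Ps)"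
  shows "\<Union>(set_mset T) \<subseteq> \<Union>(set_mset Ps) \<Longrightarrow> parts_separated T Ps \<Longrightarrow> total_corr h E T = 0"
proof (induction T)
  case (add t T)
  then have "total_corr h E T = 0"
    using parts_separated_add_mset_D by auto
  moreover have "cond_mutual_info h t (\<Union>(set_mset T)) E = 0"
    using cond_mutual_info_eq_0_if_parts_separated[OF h Ps disj E add.prems] .
  ultimately show ?case
    by (simp add: total_corr_add_mset)
qed simp

lemma total_corr_eq_0_if_sub_cmi_explicit:
  assumes h: "polymatroid h" and K: "cmi_on n K" "total_corr h (fst K) (snd K) = 0"
    and sub: "sub_cmi_explicit K' K"
  shows "total_corr h (fst K') (snd K') = 0"
proof -
  have I: "h (cmiI K \<union> fst K) = h (fst K)"
    using cmiI_determined[OF h K] .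
  have "total_corr h (fst K') (snd K') = total_corr h (fst K' - cmiI K) (Pparts (cmiI K) (cmiP K'))"
    using sub unfolding sub_cmi_explicit_def by (intro total_corr_Rcond_parts[OF h I]) auto
  also have "\<dots> = 0"
  proof (cases "size (Pparts (cmiI K) (cmiP K')) \<le> 1")
    case True
    then show ?thesis
      by (rule total_corr_size_le_1)
  next
    case False
    have "total_corr h (fst K) (cmiP K) = 0"
      using K(2) total_corr_cmiP[OF h I] by simp
    moreover have "fst K \<subseteq> fst K' - cmiI K"
      using sub cmiI_disjoint_fst[of K] unfolding sub_cmi_explicit_def by auto
    moreover have "fst K' - cmiI K \<subseteq> fst K \<union> \<Union>(set_mset (cmiP K))"
      "\<Union>(set_mset (Pparts (cmiI K) (cmiP K'))) \<subseteq> \<Union>(set_mset (cmiP K))"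
      "parts_separated (Pparts (cmiI K) (cmiP K')) (cmiP K)"
      using sub False unfolding sub_cmi_explicit_def by auto
    ultimately show ?thesis
      using total_corr_eq_0_if_parts_separated[OF h _ cmiP_disjoint[of _ K]] by blast
  qed
  finally show ?thesis .
qed

section \<open>Two families of test distributions\<close>

lemma sum_mset_indicator: "(\<Sum>Q\<in>#M. if P Q then c else 0) = (c :: real) * real (size (filter_mset P M))"
  by (induction M) (auto simp: distrib_left)

lemma total_corr_eq_0_iff_indicator:
  assumes h: "\<And>X. h (X \<union> C) - h C = (if X \<inter> B \<noteq> {} then c else 0)" and c: "0 < c"
  shows "total_corr h C M = 0 \<longleftrightarrow> size (filter_mset (\<lambda>Q. Q \<inter> B \<noteq> {}) M) \<le> 1"
proof -
  define s where "s = size (filter_mset (\<lambda>Q. Q \<inter> B \<noteq> {}) M)"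
  have "\<Union>(set_mset M) \<inter> B \<noteq> {} \<longleftrightarrow> filter_mset (\<lambda>Q. Q \<inter> B \<noteq> {}) M \<noteq> {#}"
    by auto
  then have "\<Union>(set_mset M) \<inter> B \<noteq> {} \<longleftrightarrow> 0 < s"
    unfolding s_def nonempty_has_size .
  then have "total_corr h C M = c * real s - (if 0 < s then c else 0)"
    unfolding total_corr_def h s_def sum_mset_indicator by simp
  then show ?thesis
    using c unfolding s_def[symmetric] by (cases "s = 0"; cases "s = 1") (auto simp: algebra_simps)
qed

definition shared_coin :: "nat set \<Rightarrow> (nat \<Rightarrow> nat) pmf" where
  "shared_coin B = map_pmf (\<lambda>b i. if i \<in> B \<and> b then 1 else 0) (pmf_of_set (UNIV :: bool set))"

lemma admissible_shared_coin: "admissible n (shared_coin B)"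
  by (rule admissible_finite_support) (simp add: shared_coin_def)

lemma joint_ent_shared_coin: "joint_ent (shared_coin B) A = (if A \<inter> B \<noteq> {} then ln 2 else 0)"
proof -
  define f where "f b = rv A (\<lambda>i. if i \<in> B \<and> b then 1 else 0)" for b :: bool
  have ent: "joint_ent (shared_coin B) A = ent (map_pmf f (pmf_of_set UNIV))"
    unfolding joint_ent_def shared_coin_def f_def by (simp add: map_pmf_comp)
  show ?thesis
  proof (cases "A \<inter> B \<noteq> {}")
    case True
    then obtain i where "i \<in> A" "i \<in> B"
      by auto
    then have "f b' = f b \<longleftrightarrow> b' = b" for b b'
      unfolding f_def rv_def fun_eq_iff by (cases b; cases b') auto
    then have "UNIV \<inter> {b'. f b' = f b} = {b}" for b
      by auto
    then have "ent (map_pmf f (pmf_of_set UNIV)) = ln (real (card (UNIV :: bool set)) / real 1)"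
      by (intro ent_map_pmf_of_set_uniform_fibres) auto
    then show ?thesis
      using ent True by simp
  next
    case False
    then have "UNIV \<inter> {b'. f b' = f b} = UNIV" for b
      unfolding f_def rv_def fun_eq_iff by auto
    then have "ent (map_pmf f (pmf_of_set UNIV)) = ln (real (card (UNIV :: bool set)) / real 2)"
      by (intro ent_map_pmf_of_set_uniform_fibres) auto
    then show ?thesis
      using ent False by simp
  qed
qed

lemma valid_shared_coin_iff:
  "valid (shared_coin B) K \<longleftrightarrow> B \<inter> fst K \<noteq> {} \<or> size (filter_mset (\<lambda>Q. Q \<inter> B \<noteq> {}) (snd K)) \<le> 1"
proof (cases "B \<inter> fst K = {}")
  case True
  have "total_corr (joint_ent (shared_coin B)) (fst K) (snd K) = 0
      \<longleftrightarrow> size (filter_mset (\<lambda>Q. Q \<inter> B \<noteq> {}) (snd K)) \<le> 1"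
    using True by (intro total_corr_eq_0_iff_indicator[where c = "ln 2"]) (auto simp: joint_ent_shared_coin)
  then show ?thesis
    using True by (simp add: valid_iff_total_corr)
next
  case False
  have "total_corr (joint_ent (shared_coin B)) (fst K) (snd K) = 0
      \<longleftrightarrow> size (filter_mset (\<lambda>Q. Q \<inter> {} \<noteq> {}) (snd K)) \<le> 1"
    using False by (intro total_corr_eq_0_iff_indicator[where c = "ln 2"]) (auto simp: joint_ent_shared_coin)
  then show ?thesis
    using False by (simp add: valid_iff_total_corr)
qed

definition xor_outcome :: "nat \<Rightarrow> nat \<Rightarrow> nat \<Rightarrow> bool \<times> bool \<Rightarrow> nat \<Rightarrow> nat" where
  "xor_outcome m1 m2 c = (\<lambda>(a, b) i.
     if i = m1 then of_bool a else if i = m2 then of_bool b else if i = c then of_bool (a \<noteq> b) else 0)"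

text \<open>Any two of X_m1, X_m2, X_c are independent fair bits, and any two determine the third.\<close>
definition xor_triple :: "nat \<Rightarrow> nat \<Rightarrow> nat \<Rightarrow> (nat \<Rightarrow> nat) pmf" where
  "xor_triple m1 m2 c = map_pmf (xor_outcome m1 m2 c) (pmf_of_set UNIV)"

lemma admissible_xor_triple: "admissible n (xor_triple m1 m2 c)"
  by (rule admissible_finite_support) (simp add: xor_triple_def)

lemma UNIV_bool_prod: "(UNIV :: (bool \<times> bool) set) = {(True, True), (True, False), (False, True), (False, False)}"
  by (auto simp: UNIV_bool)

lemma rv_xor_outcome_eq_iff:
  assumes "distinct [m1, m2, c]"
  shows "rv A (xor_outcome m1 m2 c (a', b')) = rv A (xor_outcome m1 m2 c (a, b)) \<longleftrightarrow>
    (m1 \<in> A \<longrightarrow> a' = a) \<and> (m2 \<in> A \<longrightarrow> b' = b) \<and> (c \<in> A \<longrightarrow> (a' \<noteq> b') = (a \<noteq> b))"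
  unfolding rv_eq_iff xor_outcome_def using assms by (auto split: if_splits)

lemma card_xor_fibre:
  fixes a b :: bool
  shows "card (UNIV \<inter> {(a', b'). (a1 \<longrightarrow> a' = a) \<and> (a2 \<longrightarrow> b' = b) \<and> (a3 \<longrightarrow> (a' \<noteq> b') = (a \<noteq> b))})
     = 2 ^ (2 - min 2 (of_bool a1 + of_bool a2 + of_bool a3))"
  unfolding UNIV_bool_prod
  by (cases a; cases b; cases a1; cases a2; cases a3) (simp_all add: Int_insert_left)

lemma joint_ent_xor_triple:
  assumes "distinct [m1, m2, c]"
  shows "joint_ent (xor_triple m1 m2 c) A = ln 2 * min 2 (card (A \<inter> {m1, m2, c}))"
proof -
  define k where "k = min 2 (card (A \<inter> {m1, m2, c}))"
  define F where "F = rv A \<circ> xor_outcome m1 m2 c"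
  have k: "k = min 2 (of_bool (m1 \<in> A) + of_bool (m2 \<in> A) + of_bool (c \<in> A))"
    using assms unfolding k_def by (cases "m1 \<in> A"; cases "m2 \<in> A"; cases "c \<in> A") auto
  have "card (UNIV \<inter> {\<omega>'. F \<omega>' = F \<omega>}) = 2 ^ (2 - k)" for \<omega>
  proof -
    obtain a b where \<omega>: "\<omega> = (a, b)"
      by (cases \<omega>)
    have "{\<omega>'. F \<omega>' = F \<omega>} = {(a', b'). (m1 \<in> A \<longrightarrow> a' = a) \<and> (m2 \<in> A \<longrightarrow> b' = b)
        \<and> (c \<in> A \<longrightarrow> (a' \<noteq> b') = (a \<noteq> b))}"
      unfolding \<omega> F_def by (simp add: set_eq_iff split_paired_all rv_xor_outcome_eq_iff[OF assms])
    then show ?thesis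
      unfolding k by (simp only: card_xor_fibre)
  qed
  then have "ent (map_pmf F (pmf_of_set UNIV)) = ln (real (card (UNIV :: (bool \<times> bool) set)) / real (2 ^ (2 - k)))"
    using power_increasing[of "2 - k" 2 "2 :: nat"]
    by (intro ent_map_pmf_of_set_uniform_fibres) (auto simp: UNIV_bool_prod)
  also have "real (card (UNIV :: (bool \<times> bool) set)) / real (2 ^ (2 - k)) = 2 ^ k"
  proof -
    have "k \<in> {0, 1, 2}"
      unfolding k_def by auto
    then show ?thesis
      by (auto simp: UNIV_bool_prod)
  qed
  finally show ?thesis
    unfolding joint_ent_def xor_triple_def F_def k_def by (simp add: map_pmf_comp ln_realpow)
qed

section \<open>The sub-CMI conditions are necessary\<close>

lemma total_corr_xor_triple_eq_0:
  assumes d: "distinct [m1, m2, c]" and C: "{m1, m2, c} \<inter> C = {}"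
    and M: "\<forall>Q\<in>#M. c \<notin> Q \<and> \<not> (m1 \<in> Q \<and> m2 \<in> Q)"
    and once: "size (filter_mset (\<lambda>Q. m1 \<in> Q) M) = 1" "size (filter_mset (\<lambda>Q. m2 \<in> Q) M) = 1"
  shows "total_corr (joint_ent (xor_triple m1 m2 c)) C M = 0"
proof -
  define h where "h = joint_ent (xor_triple m1 m2 c)"
  have h: "h X = ln 2 * min 2 (card (X \<inter> {m1, m2, c}))" for X
    unfolding h_def by (rule joint_ent_xor_triple[OF d])
  have hC: "h C = 0"
    using C by (simp add: h Int_commute)
  have "h (Q \<union> C) - h C = (if m1 \<in> Q then ln 2 else 0) + (if m2 \<in> Q then ln 2 else 0)"
    if Q: "Q \<in># M" for Q
  proof -
    have "c \<notin> Q" "\<not> (m1 \<in> Q \<and> m2 \<in> Q)"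
      using M Q by auto
    moreover have "m1 \<notin> C" "m2 \<notin> C" "c \<notin> C"
      using C by auto
    ultimately have "(Q \<union> C) \<inter> {m1, m2, c} = (if m1 \<in> Q then {m1} else if m2 \<in> Q then {m2} else {})"
      by auto
    then show ?thesis
      using \<open>\<not> (m1 \<in> Q \<and> m2 \<in> Q)\<close> hC by (simp add: h)
  qed
  then have "(\<Sum>Q\<in>#M. h (Q \<union> C) - h C)
      = (\<Sum>Q\<in>#M. (if m1 \<in> Q then ln 2 else 0) + (if m2 \<in> Q then ln 2 else 0))"
    by (intro arg_cong[where f = sum_mset] image_mset_cong)
  also have "\<dots> = (\<Sum>Q\<in>#M. if m1 \<in> Q then ln 2 else 0) + (\<Sum>Q\<in>#M. if m2 \<in> Q then ln 2 else 0)"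
    by (rule sum_mset.distrib)
  also have "\<dots> = 2 * ln 2"
    unfolding sum_mset_indicator once by simp
  finally have sum: "(\<Sum>Q\<in>#M. h (Q \<union> C) - h C) = 2 * ln 2" .
  obtain Q1 Q2 where "Q1 \<in># filter_mset (\<lambda>Q. m1 \<in> Q) M" "Q2 \<in># filter_mset (\<lambda>Q. m2 \<in> Q) M"
    using once by (metis multiset_nonemptyE nonempty_has_size zero_less_one)
  then have "m1 \<in> \<Union>(set_mset M)" "m2 \<in> \<Union>(set_mset M)"
    by auto
  then have "(\<Union>(set_mset M) \<union> C) \<inter> {m1, m2, c} = {m1, m2}"
    using C M by auto
  then have "h (\<Union>(set_mset M) \<union> C) = 2 * ln 2"
    using d by (simp add: h)
  then show ?thesis
    unfolding total_corr_def h_def[symmetric] sum by (simp add: hC)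
qed

lemma valid_xor_triple_iff:
  assumes d: "distinct [m1, m2, c]" and C: "c \<in> fst K" "m1 \<notin> fst K" "m2 \<notin> fst K"
  shows "valid (xor_triple m1 m2 c) K \<longleftrightarrow> size (filter_mset (\<lambda>Q. Q \<inter> {m1, m2} \<noteq> {}) (snd K)) \<le> 1"
  unfolding valid_iff_total_corr
proof (rule total_corr_eq_0_iff_indicator)
  fix X
  show "joint_ent (xor_triple m1 m2 c) (X \<union> fst K) - joint_ent (xor_triple m1 m2 c) (fst K)
      = (if X \<inter> {m1, m2} \<noteq> {} then ln 2 else 0)"
    using C d by (cases "m1 \<in> X"; cases "m2 \<in> X") (auto simp: joint_ent_xor_triple Int_insert_right)
qed simp

lemma not_implies_if_counterexample:
  "admissible n P \<Longrightarrow> valid P K \<Longrightarrow> \<not> valid P K' \<Longrightarrow> \<not> cmi_implies n K K'"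
  unfolding cmi_implies_def by blast

lemma size_filter_meets_snd_pur:
  assumes "B \<inter> fst K = {}"
  shows "size (filter_mset (\<lambda>Q. Q \<inter> B \<noteq> {}) (snd (pur K)))
    = size (filter_mset (\<lambda>Q. Q \<inter> B \<noteq> {}) (snd K))"
proof -
  have "filter_mset (\<lambda>Q. Q \<inter> B \<noteq> {}) (snd (pur K))
      = filter_mset (\<lambda>Q. Q \<inter> B \<noteq> {}) (image_mset (\<lambda>Q. Q - fst K) (snd K))"
    unfolding snd_pur filter_filter_mset by (rule filter_mset_cong0) auto
  also have "\<dots> = image_mset (\<lambda>Q. Q - fst K) (filter_mset (\<lambda>Q. Q \<inter> B \<noteq> {}) (snd K))"
    unfolding filter_mset_image_mset using assms by (intro arg_cong[where f = "image_mset _"] filter_mset_cong0) auto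
  finally show ?thesis
    by simp
qed

lemma valid_shared_coin_iff_pur:
  "valid (shared_coin B) K \<longleftrightarrow> B \<inter> fst K \<noteq> {} \<or> size (filter_mset (\<lambda>Q. Q \<inter> B \<noteq> {}) (snd (pur K))) \<le> 1"
  using size_filter_meets_snd_pur[of B K] by (auto simp: valid_shared_coin_iff)

lemma size_snd_pur_if_not_degenerate:
  assumes "\<not> degenerate n K"
  shows "2 \<le> size (snd (pur K))"
proof (rule ccontr)
  assume "\<not> 2 \<le> size (snd (pur K))"
  then have "valid P K" for P
    unfolding valid_iff_total_corr total_corr_pur[of _ K] by (intro total_corr_size_le_1) simp
  then show False
    using assms unfolding degenerate_def by blast
qed

lemma two_Rcond_parts_meet:
  assumes "cmiI K' \<subseteq> cmiI K"
    and "t \<in># Pparts (cmiI K) (cmiP K')" "t' \<in># Pparts (cmiI K) (cmiP K') - {#t#}"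
    and "t \<inter> B \<noteq> {}" "t' \<inter> B \<noteq> {}"
  shows "2 \<le> size (filter_mset (\<lambda>Q. Q \<inter> B \<noteq> {}) (snd (pur K')))"
proof -
  have "2 \<le> size (filter_mset (\<lambda>Q. Q \<inter> B \<noteq> {}) (Pparts (cmiI K) (snd (pur K'))))"
    using assms unfolding Pparts_cmiP[OF assms(1)] by (intro size_filter_mset_ge2I)
  also have "\<dots> \<le> size (filter_mset (\<lambda>Q. Q \<inter> B \<noteq> {}) (snd (pur K')))"
    by (rule size_filter_Pparts_le) auto
  finally show ?thesis .
qed

lemma not_implies_if_not_cond_subset:
  assumes K: "cmi_on n K" and K': "cmi_on n K'" "\<not> degenerate n K'" and "\<not> fst K \<subseteq> fst K'"
  shows "\<not> cmi_implies n K K'"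
proof -
  define B where "B = {1..n} - fst K'"
  have "B \<inter> fst K \<noteq> {}"
    using assms(1,4) unfolding B_def cmi_on_def by auto
  then have "valid (shared_coin B) K"
    by (simp add: valid_shared_coin_iff_pur)
  moreover have "filter_mset (\<lambda>Q. Q \<inter> B \<noteq> {}) (snd (pur K')) = filter_mset (\<lambda>_. True) (snd (pur K'))"
    using mem_snd_pur[of _ K'] mem_snd_pur_subset[OF K'(1)] unfolding B_def
    by (intro filter_mset_cong0) blast
  then have "\<not> valid (shared_coin B) K'"
    using size_snd_pur_if_not_degenerate[OF K'(2)] unfolding valid_shared_coin_iff_pur B_def by auto
  ultimately show ?thesis
    using admissible_shared_coin by (intro not_implies_if_counterexample)
qed

lemma not_implies_if_not_repeated_subset:
  assumes "\<not> cmiI K' \<subseteq> cmiI K"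
  shows "\<not> cmi_implies n K K'"
proof -
  obtain d where d: "d \<in> cmiI K'" "d \<notin> cmiI K"
    using assms by auto
  have meets: "filter_mset (\<lambda>Q. Q \<inter> {d} \<noteq> {}) M = filter_mset (\<lambda>Q. d \<in> Q) M" for M :: "nat set multiset"
    by (rule filter_mset_cong0) auto
  have "valid (shared_coin {d}) K"
    using d(2) unfolding valid_shared_coin_iff_pur meets cmiI_def mem_repI_iff by auto
  moreover have "d \<notin> fst K'"
    using d(1) cmiI_disjoint_fst[of K'] by blast
  then have "\<not> valid (shared_coin {d}) K'"
    using d(1) unfolding valid_shared_coin_iff_pur meets cmiI_def mem_repI_iff by auto
  ultimately show ?thesis
    using admissible_shared_coin by (intro not_implies_if_counterexample)
qed

lemma not_implies_if_Rcond_parts_not_covered: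
  assumes sub: "cmiI K' \<subseteq> cmiI K" and size: "2 \<le> size (Pparts (cmiI K) (cmiP K'))"
    and t: "t \<in># Pparts (cmiI K) (cmiP K')" and m: "m \<in> t" "m \<notin> \<Union>(set_mset (cmiP K))"
  shows "\<not> cmi_implies n K K'"
proof -
  obtain t' where t': "t' \<in># Pparts (cmiI K) (cmiP K') - {#t#}"
    using size t by (rule mset_other_member)
  then have "t' \<in># Pparts (cmiI K) (cmiP K')"
    by (meson in_diffD)
  then obtain m' where m': "m' \<in> t'" "m' \<notin> fst K'" "m' \<notin> cmiI K"
    using mem_Pparts_cmiP by blast
  have m_disj: "m \<notin> fst K'" "m \<notin> cmiI K"
    using t m(1) mem_Pparts_cmiP by blast+
  define B where "B = {m, m'}"
  have "valid (shared_coin B) K"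
  proof (cases "B \<inter> fst K = {}")
    case True
    have "m \<notin> Q" if "Q \<in># snd (pur K)" for Q
      using mem_snd_pur_subset_cmiI_cmiP[OF that] m(2) m_disj(2) by blast
    then have "filter_mset (\<lambda>Q. Q \<inter> B \<noteq> {}) (snd (pur K)) = filter_mset (\<lambda>Q. m' \<in> Q) (snd (pur K))"
      unfolding B_def by (intro filter_mset_cong0) auto
    moreover have "size (filter_mset (\<lambda>Q. m' \<in> Q) (snd (pur K))) \<le> 1"
      using m'(3) unfolding cmiI_def mem_repI_iff by simp
    ultimately show ?thesis
      unfolding valid_shared_coin_iff_pur by simp
  qed (simp add: valid_shared_coin_iff_pur)
  moreover have "\<not> valid (shared_coin B) K'"
    using two_Rcond_parts_meet[OF sub t t', of B] m m' m_disj
    unfolding valid_shared_coin_iff_pur B_def by auto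
  ultimately show ?thesis
    using admissible_shared_coin by (intro not_implies_if_counterexample)
qed

lemma size_filter_meets_snd_pur_if_not_separated:
  assumes m: "m1 \<notin> cmiI K" "m2 \<notin> cmiI K"
    and not_sep: "\<not> (\<exists>X Y. X \<in># cmiP K \<and> Y \<in># cmiP K - {#X#} \<and> m1 \<in> X \<and> m2 \<in> Y)"
  shows "size (filter_mset (\<lambda>Q. Q \<inter> {m1, m2} \<noteq> {}) (snd (pur K))) \<le> 1"
proof (rule ccontr)
  assume "\<not> ?thesis"
  then have "2 \<le> size (filter_mset (\<lambda>Q. Q \<inter> {m1, m2} \<noteq> {}) (snd (pur K)))"
    by simp
  then obtain Qa Qb R where pur: "snd (pur K) = add_mset Qa (add_mset Qb R)"
    and meet: "Qa \<inter> {m1, m2} \<noteq> {}" "Qb \<inter> {m1, m2} \<noteq> {}"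
    by (rule size_filter_mset_ge2E)
  have "\<not> (m \<in> Qa \<and> m \<in> Qb)" if "m \<notin> cmiI K" for m
    using that unfolding cmiI_def mem_repI_iff pur by auto
  then have cases: "(m1 \<in> Qa \<and> m2 \<in> Qb) \<or> (m2 \<in> Qa \<and> m1 \<in> Qb)"
    using meet m by blast
  then have "Qa - cmiI K \<noteq> {}" "Qb - cmiI K \<noteq> {}"
    using m by auto
  then have "cmiP K = add_mset (Qa - cmiI K) (add_mset (Qb - cmiI K) (Pparts (cmiI K) R))"
    unfolding cmiP_def pur Pparts_def by simp
  then have "Qa - cmiI K \<in># cmiP K" "Qb - cmiI K \<in># cmiP K - {#Qa - cmiI K#}"
    "Qb - cmiI K \<in># cmiP K" "Qa - cmiI K \<in># cmiP K - {#Qb - cmiI K#}"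
    by auto
  then show False
    using not_sep cases m by blast
qed

lemma not_implies_if_not_parts_separated:
  assumes sub: "cmiI K' \<subseteq> cmiI K"
    and "\<not> parts_separated (Pparts (cmiI K) (cmiP K')) (cmiP K)"
  shows "\<not> cmi_implies n K K'"
proof -
  obtain A A' m1 m2 where A: "A \<in># Pparts (cmiI K) (cmiP K')" "A' \<in># Pparts (cmiI K) (cmiP K') - {#A#}"
    and m: "m1 \<in> A" "m2 \<in> A'"
    and not_sep: "\<not> (\<exists>X Y. X \<in># cmiP K \<and> Y \<in># cmiP K - {#X#} \<and> m1 \<in> X \<and> m2 \<in> Y)"
    using assms(2) unfolding parts_separated_def by blast
  have "A' \<in># Pparts (cmiI K) (cmiP K')"
    using A(2) by (meson in_diffD)
  then have m_disj: "m1 \<notin> fst K'" "m2 \<notin> fst K'" "m1 \<notin> cmiI K" "m2 \<notin> cmiI K"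
    using A(1) m mem_Pparts_cmiP by blast+
  have "valid (shared_coin {m1, m2}) K"
    using size_filter_meets_snd_pur_if_not_separated[OF m_disj(3,4) not_sep]
    unfolding valid_shared_coin_iff_pur by blast
  moreover have "\<not> valid (shared_coin {m1, m2}) K'"
    using two_Rcond_parts_meet[OF sub A, of "{m1, m2}"] m m_disj
    unfolding valid_shared_coin_iff_pur by auto
  ultimately show ?thesis
    using admissible_shared_coin by (intro not_implies_if_counterexample)
qed

lemma distinct_if_parts_separated:
  assumes "X \<in># cmiP K" "Y \<in># cmiP K - {#X#}" "m1 \<in> X" "m2 \<in> Y" "c \<notin> \<Union>(set_mset (cmiP K))"
  shows "distinct [m1, m2, c]"
proof -
  have "Y \<in># cmiP K"
    using assms(2) by (meson in_diffD)
  moreover have "m1 \<noteq> m2"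
    using cmiP_disjoint[OF assms(1,2)] assms(3,4) by blast
  ultimately show ?thesis
    using assms(1,3,4,5) by auto
qed

lemma size_filter_mem_snd_pur_cmiP:
  assumes "m \<in> Z" "Z \<in># cmiP K"
  shows "size (filter_mset (\<lambda>Q. m \<in> Q) (snd (pur K))) = 1"
proof -
  obtain Q where "Q \<in># snd (pur K)" "m \<in> Q" "m \<notin> cmiI K"
    using mem_cmiP[OF assms(2)] assms(1) by blast
  then have "filter_mset (\<lambda>Q. m \<in> Q) (snd (pur K)) \<noteq> {#}" "m \<notin> repI (snd (pur K))"
    unfolding cmiI_def by auto
  then show ?thesis
    unfolding mem_repI_iff nonempty_has_size by linarith
qed

lemma cmiP_separated_not_in_one_member:
  assumes XY: "X \<in># cmiP K" "Y \<in># cmiP K - {#X#}" "m1 \<in> X" "m2 \<in> Y" and Q: "Q \<in># snd (pur K)"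
  shows "\<not> (m1 \<in> Q \<and> m2 \<in> Q)"
proof
  assume mQ: "m1 \<in> Q \<and> m2 \<in> Q"
  have Y: "Y \<in># cmiP K"
    using XY(2) by (meson in_diffD)
  have "m1 \<in> Q - cmiI K" "m2 \<in> Q - cmiI K"
    using mQ mem_cmiP[OF XY(1)] mem_cmiP[OF Y] XY(3,4) by blast+
  moreover from this have Z: "Q - cmiI K \<in># cmiP K"
    using Q by (intro diff_cmiI_mem_cmiP) auto
  ultimately have "X = Q - cmiI K" "Y = Q - cmiI K"
    using disjoint_members_eq[OF cmiP_disjoint XY(1) Z XY(3)]
      disjoint_members_eq[OF cmiP_disjoint Y Z XY(4)] by auto
  then show False
    using cmiP_disjoint[OF XY(1,2)] XY(3) by auto
qed

lemma valid_xor_triple_if_parts_separated: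
  assumes XY: "X \<in># cmiP K" "Y \<in># cmiP K - {#X#}" "m1 \<in> X" "m2 \<in> Y"
    and c: "c \<notin> fst K" "c \<notin> cmiI K" "c \<notin> \<Union>(set_mset (cmiP K))"
  shows "valid (xor_triple m1 m2 c) K"
proof -
  have Y: "Y \<in># cmiP K"
    using XY(2) by (meson in_diffD)
  have "{m1, m2, c} \<inter> fst K = {}"
    using mem_cmiP[OF XY(1)] mem_cmiP[OF Y] XY(3,4) c(1) by blast
  moreover have "\<forall>Q\<in>#snd (pur K). c \<notin> Q \<and> \<not> (m1 \<in> Q \<and> m2 \<in> Q)"
    using mem_snd_pur_subset_cmiI_cmiP[of _ K] c(2,3) cmiP_separated_not_in_one_member[OF XY] by blast
  ultimately have "total_corr (joint_ent (xor_triple m1 m2 c)) (fst K) (snd (pur K)) = 0"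
    using size_filter_mem_snd_pur_cmiP[OF XY(3,1)] size_filter_mem_snd_pur_cmiP[OF XY(4) Y]
    by (intro total_corr_xor_triple_eq_0[OF distinct_if_parts_separated[OF XY c(3)]])
  then show ?thesis
    unfolding valid_iff_total_corr total_corr_pur[of _ K] .
qed

lemma not_implies_if_cond_not_covered:
  assumes sub: "cmiI K' \<subseteq> cmiI K" and size: "2 \<le> size (Pparts (cmiI K) (cmiP K'))"
    and sep: "parts_separated (Pparts (cmiI K) (cmiP K')) (cmiP K)"
    and c: "c \<in> fst K' - cmiI K" "c \<notin> fst K" "c \<notin> \<Union>(set_mset (cmiP K))"
  shows "\<not> cmi_implies n K K'"
proof -
  define T where "T = Pparts (cmiI K) (cmiP K')"
  have "0 < size T"
    using size unfolding T_def by linarith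
  then obtain t1 where t1: "t1 \<in># T"
    by (metis multiset_nonemptyE nonempty_has_size)
  then obtain t2 where t2: "t2 \<in># T - {#t1#}"
    using mset_other_member[OF size[folded T_def]] by blast
  then have "t2 \<in># T"
    by (meson in_diffD)
  then have "t1 \<noteq> {}" "t2 \<noteq> {}" "t1 \<inter> fst K' = {}" "t2 \<inter> fst K' = {}"
    using t1 mem_Pparts_cmiP[of _ "cmiI K" K'] unfolding T_def by blast+
  then obtain m1 m2 where m: "m1 \<in> t1" "m2 \<in> t2" "m1 \<notin> fst K'" "m2 \<notin> fst K'"
    by blast
  then obtain X Y where XY: "X \<in># cmiP K" "Y \<in># cmiP K - {#X#}" "m1 \<in> X" "m2 \<in> Y"
    using sep t1 t2 unfolding parts_separated_def T_def by blast
  have "valid (xor_triple m1 m2 c) K"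
    using c by (intro valid_xor_triple_if_parts_separated[OF XY]) auto
  moreover have "\<not> valid (xor_triple m1 m2 c) K'"
  proof -
    have "t1 \<inter> {m1, m2} \<noteq> {}" "t2 \<inter> {m1, m2} \<noteq> {}"
      using m(1,2) by blast+
    then have "2 \<le> size (filter_mset (\<lambda>Q. Q \<inter> {m1, m2} \<noteq> {}) (snd (pur K')))"
      by (rule two_Rcond_parts_meet[OF sub t1[unfolded T_def] t2[unfolded T_def]])
    moreover have "{m1, m2} \<inter> fst K' = {}"
      using m(3,4) by blast
    ultimately have "2 \<le> size (filter_mset (\<lambda>Q. Q \<inter> {m1, m2} \<noteq> {}) (snd K'))"
      by (simp only: size_filter_meets_snd_pur)
    moreover have "c \<in> fst K'"
      using c(1) by blast
    ultimately show ?thesis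
      using valid_xor_triple_iff[OF distinct_if_parts_separated[OF XY c(3)] _ m(3,4)] by simp
  qed
  ultimately show ?thesis
    using admissible_xor_triple by (intro not_implies_if_counterexample)
qed

lemma not_implies_if_not_sub_cmi_explicit:
  assumes K: "cmi_on n K" and K': "cmi_on n K'" "\<not> degenerate n K'"
    and not_sub: "\<not> sub_cmi_explicit K' K"
  shows "\<not> cmi_implies n K K'"
proof (cases "fst K \<subseteq> fst K' \<and> cmiI K' \<subseteq> cmiI K")
  case False
  then show ?thesis
    using not_implies_if_not_cond_subset[OF K K'] not_implies_if_not_repeated_subset by blast
next
  case True
  define T where "T = Pparts (cmiI K) (cmiP K')"
  have size: "2 \<le> size T"
    and not_sub': "\<not> (\<Union>(set_mset T) \<subseteq> \<Union>(set_mset (cmiP K))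
      \<and> fst K' - cmiI K \<subseteq> fst K \<union> \<Union>(set_mset (cmiP K)) \<and> parts_separated T (cmiP K))"
    using not_sub True unfolding sub_cmi_explicit_def T_def by auto
  consider (not_covered) t m where "t \<in># T" "m \<in> t" "m \<notin> \<Union>(set_mset (cmiP K))"
    | (not_separated) "\<not> parts_separated T (cmiP K)"
    | (cond) c where "parts_separated T (cmiP K)" "c \<in> fst K' - cmiI K" "c \<notin> fst K"
        "c \<notin> \<Union>(set_mset (cmiP K))"
    using not_sub' by blast
  then show ?thesis
  proof cases
    case not_covered
    then show ?thesis
      using True size unfolding T_def by (intro not_implies_if_Rcond_parts_not_covered) auto
  next
    case not_separated
    then show ?thesis
      using True unfolding T_def by (intro not_implies_if_not_parts_separated) auto
  next
    case cond
    then show ?thesis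
      using True size unfolding T_def by (intro not_implies_if_cond_not_covered) auto
  qed
qed

lemma implies_if_sub_cmi_explicit:
  assumes K: "cmi_on n K" and K': "cmi_on n K'" and sub: "sub_cmi_explicit K' K"
  shows "cmi_implies n K K'"
  unfolding cmi_implies_def
proof (intro allI impI)
  fix P
  assume "admissible n P" and "valid P K"
  then show "valid P K'"
    using polymatroid_joint_ent total_corr_eq_0_if_sub_cmi_explicit[OF _ K _ sub]
    unfolding valid_iff_total_corr_restrict[OF K] valid_iff_total_corr_restrict[OF K'] by blast
qed

theorem mainTheorem3:
  fixes n :: nat and K K' :: cmi
  assumes "cmi_on n K" and "cmi_on n K'"
  shows "cmi_implies n K K' \<longleftrightarrow> sub_cmi n K' K"
proof -
  have "cmi_implies n K K' \<longleftrightarrow> degenerate n K' \<or> sub_cmi_explicit K' K"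
  proof
    assume "cmi_implies n K K'"
    then show "degenerate n K' \<or> sub_cmi_explicit K' K"
      using not_implies_if_not_sub_cmi_explicit[OF assms] by blast
  next
    assume "degenerate n K' \<or> sub_cmi_explicit K' K"
    then show "cmi_implies n K K'"
      using implies_if_sub_cmi_explicit[OF assms] unfolding degenerate_def cmi_implies_def by blast
  qed
  then show ?thesis
    by (simp add: sub_cmi_iff_explicit)
qed

end
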